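(* Let $\omega_5=e^{2\pi i/5}$ and $\phi=(1+\sqrt5)/2$. Let $G'$ be an all-regular substructure of an oriented graph containing $n_\alpha$ alpha unicyclic components, $n_\beta$ beta unicyclic components and no vanishing unicyclic components. Then $$n_\alpha+n_\beta=\log_5\!\big(\det L_{\omega_5}(G')\cdot\det L_{\omega_5^2}(G')\big),\qquad n_\alpha-n_\beta=\log_{\phi^2}\!\left(\frac{\det L_{\omega_5}(G')}{\det L_{\omega_5^2}(G')}\right).$$
   Context: An oriented graph $G=(V,E)$ is a finite directed graph with no loops, no multiple arcs, and no pair of opposite arcs. A substructure is $(V',E')$ with $V'\subseteq V$, $E'\subseteq E$ (arcs may leave $V'$); for $|\omega|=1$ its Hermitian Laplacian $L_\omega((V',E'))$ is the $V'\times V'$ matrix with diagonal entry at $u$ the number of arcs of $E'$ incident with $u$, and $(u,v)$ entry ($u\ne v$) $-\omega$ if some arc of $E'$ goes $u\to v$, $-\overline\omega$ if some arc of $E'$ goes $v\to u$, $0$ otherwise. Its connected components are the classes $V'_i$ of vertices of $V'$ joined by paths (ignoring directions) with vertices in $V'$ and arcs in $E'$, together with the arcs $E'_i$ of $E'$ having an endpoint in $V'_i$; it is all-regular if $|V'_i|=|E'_i|$ for all $i$. A unicyclic component is a component whose arcs have both ends in $V'_i$ and whose underlying graph is connected with exactly one cycle. For a cycle of length $k$, traverse it in the direction for which the number $g$ of arcs against the traversal satisfies $0\le g\le\lfloor k/2\rfloor$. A unicyclic component with cycle length $k$ and such $g$ is alpha if $k-2g\equiv2,3\pmod5$, beta if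 $k-2g\equiv1,4\pmod5$, vanishing if $k-2g\equiv0\pmod5$. *)

theory Defs
  imports Complex_Main "HOL-Combinatorics.Permutations"
begin

definition oriented_graph :: "'a set \<Rightarrow> ('a \<times> 'a) set \<Rightarrow> bool" where
  "oriented_graph V E \<longleftrightarrow> finite V \<and> E \<subseteq> V \<times> V \<and>
     (\<forall>u. (u, u) \<notin> E) \<and> (\<forall>u v. (u, v) \<in> E \<longrightarrow> (v, u) \<notin> E)"

definition substructure :: "'a set \<Rightarrow> ('a \<times> 'a) set \<Rightarrow> 'a set \<Rightarrow> ('a \<times> 'a) set \<Rightarrow> bool" where
  "substructure V E V' E' \<longleftrightarrow> V' \<subseteq> V \<and> E' \<subseteq> E"

definition herm_lap :: "complex \<Rightarrow> 'a set \<Rightarrow> ('a \<times> 'a) set \<Rightarrow> 'a \<Rightarrow> 'a \<Rightarrow> complex" where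
  "herm_lap \<omega> V' E' u v =
     (if u = v then of_nat (card {e \<in> E'. fst e = u \<or> snd e = u})
      else if (u, v) \<in> E' then - \<omega>
      else if (v, u) \<in> E' then - cnj \<omega>
      else 0)"

definition det_on :: "'a set \<Rightarrow> ('a \<Rightarrow> 'a \<Rightarrow> complex) \<Rightarrow> complex" where
  "det_on I M = (\<Sum>p \<in> {p. p permutes I}. of_int (sign p) * (\<Prod>i\<in>I. M i (p i)))"

definition adj_rel :: "'a set \<Rightarrow> ('a \<times> 'a) set \<Rightarrow> ('a \<times> 'a) set" where
  "adj_rel V' E' = {(u, v). u \<in> V' \<and> v \<in> V' \<and> ((u, v) \<in> E' \<or> (v, u) \<in> E')}"

definition conn_rel :: "'a set \<Rightarrow> ('a \<times> 'a) set \<Rightarrow> ('a \<times> 'a) set" where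
  "conn_rel V' E' = {(u, v). u \<in> V' \<and> v \<in> V' \<and> (u, v) \<in> (adj_rel V' E')\<^sup>*}"

definition components :: "'a set \<Rightarrow> ('a \<times> 'a) set \<Rightarrow> 'a set set" where
  "components V' E' = V' // conn_rel V' E'"

definition comp_arcs :: "('a \<times> 'a) set \<Rightarrow> 'a set \<Rightarrow> ('a \<times> 'a) set" where
  "comp_arcs E' C = {e \<in> E'. fst e \<in> C \<or> snd e \<in> C}"

definition all_regular :: "'a set \<Rightarrow> ('a \<times> 'a) set \<Rightarrow> bool" where
  "all_regular V' E' \<longleftrightarrow> (\<forall>C \<in> components V' E'. card C = card (comp_arcs E' C))"

definition nxt :: "'a list \<Rightarrow> nat \<Rightarrow> 'a" where
  "nxt xs i = xs ! ((i + 1) mod length xs)"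

definition is_cycle_list :: "'a set \<Rightarrow> ('a \<times> 'a) set \<Rightarrow> 'a list \<Rightarrow> bool" where
  "is_cycle_list C A xs \<longleftrightarrow> distinct xs \<and> length xs \<ge> 3 \<and> set xs \<subseteq> C \<and>
     (\<forall>i < length xs. (xs ! i, nxt xs i) \<in> A \<or> (nxt xs i, xs ! i) \<in> A)"

definition cycle_arcs :: "('a \<times> 'a) set \<Rightarrow> 'a list \<Rightarrow> ('a \<times> 'a) set" where
  "cycle_arcs A xs = {e \<in> A. \<exists>i < length xs. e = (xs ! i, nxt xs i) \<or> e = (nxt xs i, xs ! i)}"

definition backward_count :: "('a \<times> 'a) set \<Rightarrow> 'a list \<Rightarrow> nat" where
  "backward_count A xs = card {i. i < length xs \<and> (nxt xs i, xs ! i) \<in> A}"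

text \<open>g is the number of backward arcs for the traversal direction with g \<le> k div 2;
  the value k - 2g.\<close>
definition cycle_value :: "('a \<times> 'a) set \<Rightarrow> 'a list \<Rightarrow> nat" where
  "cycle_value A xs = (let k = length xs; b = backward_count A xs; g = min b (k - b) in k - 2 * g)"

definition unicyclic_comp :: "('a \<times> 'a) set \<Rightarrow> 'a set \<Rightarrow> bool" where
  "unicyclic_comp E' C \<longleftrightarrow> comp_arcs E' C \<subseteq> C \<times> C \<and>
     card {cycle_arcs (comp_arcs E' C) xs | xs. is_cycle_list C (comp_arcs E' C) xs} = 1"

definition alpha_comp :: "('a \<times> 'a) set \<Rightarrow> 'a set \<Rightarrow> bool" where
  "alpha_comp E' C \<longleftrightarrow> unicyclic_comp E' C \<and>
     (\<exists>xs. is_cycle_list C (comp_arcs E' C) xs \<and> cycle_value (comp_arcs E' C) xs mod 5 \<in> {2, 3})"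

definition beta_comp :: "('a \<times> 'a) set \<Rightarrow> 'a set \<Rightarrow> bool" where
  "beta_comp E' C \<longleftrightarrow> unicyclic_comp E' C \<and>
     (\<exists>xs. is_cycle_list C (comp_arcs E' C) xs \<and> cycle_value (comp_arcs E' C) xs mod 5 \<in> {1, 4})"

definition vanishing_comp :: "('a \<times> 'a) set \<Rightarrow> 'a set \<Rightarrow> bool" where
  "vanishing_comp E' C \<longleftrightarrow> unicyclic_comp E' C \<and>
     (\<exists>xs. is_cycle_list C (comp_arcs E' C) xs \<and> cycle_value (comp_arcs E' C) xs mod 5 = 0)"

definition omega5 :: complex where
  "omega5 = exp (2 * pi * \<i> / 5)"

definition golden :: real where
  "golden = (1 + sqrt 5) / 2"

end

theory Submission
  imports Defs "HOL-Combinatorics.Cycles"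
begin

(* The Hermitian Laplacian of a substructure is block diagonal, one block per connected
   component, so its determinant is the product of the component determinants. In an
   all-regular substructure a component has as many arcs as vertices, so it is either a tree
   with a single arc leaving it or a unicyclic graph. Removing a pendant vertex (a column
   operation followed by expansion along its row) does not change the determinant, which is
   therefore 1 in the first case and, in the second, that of the bare cycle: 2 - z - cnj z,
   where z is the product of omega or cnj omega along the cycle. At omega = omega5 this is
   2 - 2 cos (2 pi (k - 2g) / 5), i.e. (5 + sqrt 5) / 2 for alpha and (5 - sqrt 5) / 2 for beta
   components, the two values being exchanged at omega5^2. Their product is 5 and their ratio
   is golden^2, which gives both identities. *)

section \<open>Determinants over finite index sets\<close>

lemma det_on_cong:
  assumes "\<And>i j. i \<in> I \<Longrightarrow> j \<in> I \<Longrightarrow> M i j = N i j"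
  shows "det_on I M = det_on I N"
  unfolding det_on_def
  by (intro sum.cong refl arg_cong2[where f = "(*)"] prod.cong)
     (auto intro: assms dest: permutes_in_image)

lemma det_on_empty [simp]: "det_on {} M = 1"
  by (simp add: det_on_def)

lemma det_on_diagonal_row:
  assumes fin: "finite I" and v: "v \<in> I" and row: "\<And>j. j \<in> I \<Longrightarrow> j \<noteq> v \<Longrightarrow> M v j = 0"
  shows "det_on I M = M v v * det_on (I - {v}) M"
proof -
  let ?t = "\<lambda>p. of_int (sign p) * (\<Prod>i\<in>I. M i (p i))"
  have sub: "{p. p permutes I - {v}} \<subseteq> {p. p permutes I}"
    by (auto intro: permutes_subset)
  have zero: "?t p = 0" if "p permutes I" "\<not> p permutes I - {v}" for p
  proof -
    have "p v \<noteq> v"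
      using that unfolding permutes_def by (metis Diff_iff singletonD)
    then have "M v (p v) = 0"
      using row permutes_in_image[OF that(1)] v by auto
    then show ?thesis
      using fin v by (metis mult_zero_right prod_zero)
  qed
  have fixes_v: "?t p = M v v * (of_int (sign p) * (\<Prod>i\<in>I - {v}. M i (p i)))"
    if "p permutes I - {v}" for p
  proof -
    have "p v = v"
      using that by (simp add: permutes_not_in)
    then show ?thesis
      using prod.remove[OF fin v, of "\<lambda>i. M i (p i)"] by (simp add: ac_simps)
  qed
  have "det_on I M = (\<Sum>p | p permutes I - {v}. ?t p)"
    unfolding det_on_def
    by (rule sum.mono_neutral_right[OF finite_permutations[OF fin] sub]) (use zero in blast)
  also have "\<dots> = M v v * det_on (I - {v}) M"
    by (simp add: det_on_def sum_distrib_left fixes_v)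
  finally show ?thesis .
qed

lemma det_on_equal_columns:
  assumes fin: "finite I" and u: "u \<in> I" and v: "v \<in> I" and "u \<noteq> v"
    and eq: "\<And>i. i \<in> I \<Longrightarrow> M i u = M i v"
  shows "det_on I M = 0"
proof -
  let ?P = "{p. p permutes I}"
  let ?t = "\<lambda>p. of_int (sign p) * (\<Prod>i\<in>I. M i (p i)) :: complex"
  let ?s = "\<lambda>p. transpose u v \<circ> p"
  have s_in: "?s p \<in> ?P" if "p \<in> ?P" for p
    using that permutes_compose[OF _ permutes_swap_id[OF u v]] by blast
  have "?s (?s p) = p" for p
    by (simp add: comp_assoc[symmetric])
  then have bij: "bij_betw ?s ?P ?P"
    using s_in by (intro bij_betwI[where g = ?s]) auto
  have flip: "?t (?s p) = - ?t p" if p: "p permutes I" for p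
  proof -
    have "permutation p"
      using fin p permutation_permutes by blast
    then have "sign (?s p) = - sign p"
      using \<open>u \<noteq> v\<close> by (simp add: sign_compose[OF permutation_swap_id] sign_swap_id)
    moreover have "(\<Prod>i\<in>I. M i (?s p i)) = (\<Prod>i\<in>I. M i (p i))"
      by (rule prod.cong) (auto simp: transpose_def eq)
    ultimately show ?thesis
      by simp
  qed
  have "det_on I M = sum (\<lambda>p. ?t (?s p)) ?P"
    unfolding det_on_def by (rule sum.reindex_bij_betw[OF bij, symmetric])
  also have "\<dots> = - det_on I M"
    using flip by (simp add: det_on_def sum_negf)
  finally show ?thesis
    by simp
qed

lemma det_on_add_column_multiple:
  assumes fin: "finite I" and u: "u \<in> I" and v: "v \<in> I" and "u \<noteq> v"
  shows "det_on I (\<lambda>i j. if j = u then M i u + c * M i v else M i j) = det_on I M"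
proof -
  define M' where "M' = (\<lambda>i j. if j = u then M i v else M i j)"
  have linear: "(\<Prod>i\<in>I. if p i = u then M i u + c * M i v else M i (p i))
      = (\<Prod>i\<in>I. M i (p i)) + c * (\<Prod>i\<in>I. M' i (p i))"
    if p: "p permutes I" for p
  proof -
    let ?i = "inv p u"
    have i: "?i \<in> I" "p ?i = u"
      using u permutes_in_image[OF permutes_inv[OF p]] permutes_inverses(1)[OF p] by auto
    have other: "p i \<noteq> u" if "i \<in> I - {?i}" for i
      using that permutes_inverses(2)[OF p, of i] by auto
    define R where "R = (\<Prod>i\<in>I - {?i}. M i (p i))"
    have r1: "(\<Prod>i\<in>I - {?i}. if p i = u then M i u + c * M i v else M i (p i)) = R"
     and r2: "(\<Prod>i\<in>I - {?i}. M' i (p i)) = R"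
      unfolding R_def M'_def by (auto intro: prod.cong simp: other)
    have split: "(\<Prod>i\<in>I. f i) = f ?i * (\<Prod>i\<in>I - {?i}. f i)" for f :: "'a \<Rightarrow> complex"
      by (rule prod.remove[OF fin i(1)])
    show ?thesis
      unfolding split[of "\<lambda>i. M i (p i)"] split[of "\<lambda>i. M' i (p i)"] 
        split[of "\<lambda>i. if p i = u then M i u + c * M i v else M i (p i)"]
      using r1 r2 i(2) by (simp add: M'_def distrib_right mult.assoc flip: R_def)
  qed
  have "det_on I (\<lambda>i j. if j = u then M i u + c * M i v else M i j)
      = det_on I M + c * det_on I M'"
    unfolding det_on_def
    by (simp add: linear distrib_left sum.distrib sum_distrib_left mult.left_commute)
  also have "det_on I M' = 0"
    by (rule det_on_equal_columns[OF fin u v \<open>u \<noteq> v\<close>]) (simp add: M'_def \<open>u \<noteq> v\<close>[symmetric])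
  finally show ?thesis
    by simp
qed

lemma det_on_zero_column:
  assumes fin: "finite I" and u: "u \<in> I" and zero: "\<And>i. i \<in> I \<Longrightarrow> M i u = 0"
  shows "det_on I M = 0"
  unfolding det_on_def
proof (intro sum.neutral ballI)
  fix p assume "p \<in> {p. p permutes I}"
  then have p: "p permutes I"
    by simp
  have "inv p u \<in> I" "p (inv p u) = u"
    using u permutes_in_image[OF permutes_inv[OF p]] permutes_inverses(1)[OF p] by auto
  then have "(\<Prod>i\<in>I. M i (p i)) = 0"
    using zero fin by (metis prod_zero)
  then show "of_int (sign p) * (\<Prod>i\<in>I. M i (p i)) = 0"
    by simp
qed

lemma det_on_add_columns:
  assumes fin: "finite I" and u: "u \<in> I" and J: "J \<subseteq> I - {u}"
  shows "det_on I (\<lambda>i j. if j = u then M i u + (\<Sum>k\<in>J. M i k) else M i j) = det_on I M"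
proof -
  have "finite J"
    using J fin by (meson finite_Diff finite_subset)
  from this J show ?thesis
  proof (induction J rule: finite_induct)
    case empty
    show ?case
      by (rule arg_cong[where f = "det_on I"]) (simp add: fun_eq_iff)
  next
    case (insert v J)
    let ?N = "\<lambda>i j. if j = u then M i u + (\<Sum>k\<in>J. M i k) else M i j"
    have v: "v \<in> I" "u \<noteq> v"
      using insert by auto
    have "(\<lambda>i j. if j = u then M i u + (\<Sum>k\<in>insert v J. M i k) else M i j)
        = (\<lambda>i j. if j = u then ?N i u + 1 * ?N i v else ?N i j)"
      using insert(1,2) v(2) by (intro ext) (simp add: ac_simps)
    then show ?case
      using det_on_add_column_multiple[OF fin u v, of ?N 1] insert by simp
  qed
qed

lemma det_on_row_sums_zero:
  assumes fin: "finite I" and "I \<noteq> {}" and rows: "\<And>i. i \<in> I \<Longrightarrow> (\<Sum>j\<in>I. M i j) = 0"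
  shows "det_on I M = 0"
proof -
  obtain u where u: "u \<in> I"
    using \<open>I \<noteq> {}\<close> by blast
  have "det_on I M = det_on I (\<lambda>i j. if j = u then M i u + (\<Sum>k\<in>I - {u}. M i k) else M i j)"
    by (rule det_on_add_columns[OF fin u, symmetric]) auto
  also have "\<dots> = 0"
  proof (rule det_on_zero_column[OF fin u])
    fix i assume "i \<in> I"
    then show "(if u = u then M i u + (\<Sum>k\<in>I - {u}. M i k) else M i u) = 0"
      using rows[of i] sum.remove[OF fin u, of "M i"] by simp
  qed
  finally show ?thesis .
qed

lemma permutes_comp_disjoint:
  assumes q: "q permutes A" and r: "r permutes B" and "A \<inter> B = {}"
  shows "x \<in> A \<Longrightarrow> (q \<circ> r) x = q x" "x \<in> B \<Longrightarrow> (q \<circ> r) x = r x"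
    "restrict_id (q \<circ> r) A = q" "restrict_id (q \<circ> r) B = r"
proof -
  have qB: "x \<in> B \<Longrightarrow> q (r x) = r x" for x
    using assms permutes_in_image[OF r] permutes_not_in[OF q] by blast
  have rA: "x \<in> A \<Longrightarrow> r x = x" for x
    using assms permutes_not_in[OF r] by blast
  show "x \<in> A \<Longrightarrow> (q \<circ> r) x = q x" "x \<in> B \<Longrightarrow> (q \<circ> r) x = r x"
    by (simp_all add: rA qB)
  show "restrict_id (q \<circ> r) A = q" "restrict_id (q \<circ> r) B = r"
    by (auto simp: fun_eq_iff restrict_id_def rA qB permutes_not_in[OF q] permutes_not_in[OF r])
qed

lemma permutes_Un_disjoint_cases:
  assumes p: "p permutes A \<union> B" and "A \<inter> B = {}" and "finite A"
  obtains a where "a \<in> A" "p a \<in> B"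
    | "restrict_id p A permutes A" "restrict_id p B permutes B" "p = restrict_id p A \<circ> restrict_id p B"
proof (cases "p ` A \<subseteq> A")
  case False
  then show ?thesis
    using that(1) permutes_in_image[OF p] by blast
next
  case True
  have inj: "inj p"
    using p by (rule permutes_inj)
  have A: "p ` A = A"
    using endo_inj_surj[OF \<open>finite A\<close> True] inj by (simp add: inj_on_subset)
  have "B = (A \<union> B) - A"
    using \<open>A \<inter> B = {}\<close> by blast
  then have "p ` B = p ` (A \<union> B) - p ` A"
    by (metis image_set_diff[OF inj])
  then have B: "p ` B = B"
    using permutes_image[OF p] A \<open>A \<inter> B = {}\<close> by auto
  have qA: "restrict_id p A permutes A" and rB: "restrict_id p B permutes B"
    using A B inj by (auto intro!: permutes_restrict_id simp: bij_betw_def inj_on_subset[OF inj])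
  moreover have "p = restrict_id p A \<circ> restrict_id p B"
  proof
    fix x
    show "p x = (restrict_id p A \<circ> restrict_id p B) x"
      using permutes_comp_disjoint(1,2)[OF qA rB \<open>A \<inter> B = {}\<close>, of x] permutes_not_in[OF p, of x]
      by (cases "x \<in> A"; cases "x \<in> B") auto
  qed
  ultimately show ?thesis
    by (rule that(2))
qed

lemma det_on_block_triangular:
  assumes fA: "finite A" and fB: "finite B" and disj: "A \<inter> B = {}"
    and zero: "\<And>i j. i \<in> A \<Longrightarrow> j \<in> B \<Longrightarrow> M i j = 0"
  shows "det_on (A \<union> B) M = det_on A M * det_on B M"
proof -
  let ?PA = "{p. p permutes A}" and ?PB = "{p. p permutes B}" and ?P = "{p. p permutes A \<union> B}"
  let ?t = "\<lambda>I p. of_int (sign p) * (\<Prod>i\<in>I. M i (p i)) :: complex"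
  let ?h = "\<lambda>(q, r). q \<circ> r :: 'a \<Rightarrow> 'a"
  note comp = permutes_comp_disjoint[OF _ _ disj]
  have inj: "inj_on ?h (?PA \<times> ?PB)"
    by (rule inj_on_inverseI[where g = "\<lambda>p. (restrict_id p A, restrict_id p B)"])
       (auto simp: comp(3,4)[unfolded comp_def])
  have img: "?h ` (?PA \<times> ?PB) \<subseteq> ?P"
    by (auto intro: permutes_compose permutes_subset)
  have block_term: "?t A q * ?t B r = ?t (A \<union> B) (q \<circ> r)" if q: "q permutes A" and r: "r permutes B" for q r
  proof -
    have "sign (q \<circ> r) = sign q * sign r"
      using fA fB q r by (simp add: sign_compose permutation_permutes[THEN iffD2, OF exI])
    moreover have "(\<Prod>i\<in>A \<union> B. M i ((q \<circ> r) i)) = (\<Prod>i\<in>A. M i (q i)) * (\<Prod>i\<in>B. M i (r i))"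
      using comp(1,2)[OF q r] by (simp add: prod.union_disjoint[OF fA fB disj] cong: prod.cong)
    ultimately show ?thesis
      by simp
  qed
  have vanish: "?t (A \<union> B) p = 0" if p_in: "p \<in> ?P - ?h ` (?PA \<times> ?PB)" for p
  proof -
    have p: "p permutes A \<union> B"
      using p_in by simp
    obtain a where a: "a \<in> A" "p a \<in> B"
    proof (rule permutes_Un_disjoint_cases[OF p disj fA])
      assume "restrict_id p A permutes A" "restrict_id p B permutes B"
        "p = restrict_id p A \<circ> restrict_id p B"
      then have "p \<in> ?h ` (?PA \<times> ?PB)"
        by (intro image_eqI[where x = "(restrict_id p A, restrict_id p B)"]) auto
      then show ?thesis
        using p_in by simp
    qed
    then have "M a (p a) = 0"
      by (rule zero)
    then have "(\<Prod>i\<in>A \<union> B. M i (p i)) = 0"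
      using fA fB a(1) by (metis UnI1 finite_UnI prod_zero)
    then show ?thesis
      by simp
  qed
  have "det_on A M * det_on B M = (\<Sum>(q, r)\<in>?PA \<times> ?PB. ?t (A \<union> B) (q \<circ> r))"
    unfolding det_on_def sum_product sum.cartesian_product by (intro sum.cong) (auto simp: block_term)
  also have "\<dots> = (\<Sum>p\<in>?h ` (?PA \<times> ?PB). ?t (A \<union> B) p)"
    by (subst sum.reindex[OF inj]) (simp add: case_prod_unfold)
  also have "\<dots> = det_on (A \<union> B) M"
    unfolding det_on_def
    by (rule sum.mono_neutral_left[OF finite_permutations img]) (use fA fB vanish in auto)
  finally show ?thesis
    by simp
qed

lemma det_on_Union_blocks:
  assumes "finite P" and "\<And>C. C \<in> P \<Longrightarrow> finite C"
    and "\<And>C D. C \<in> P \<Longrightarrow> D \<in> P \<Longrightarrow> C \<noteq> D \<Longrightarrow> C \<inter> D = {}"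
    and "\<And>C D i j. C \<in> P \<Longrightarrow> D \<in> P \<Longrightarrow> C \<noteq> D \<Longrightarrow> i \<in> C \<Longrightarrow> j \<in> D \<Longrightarrow> M i j = 0"
  shows "det_on (\<Union>P) M = (\<Prod>C\<in>P. det_on C M)"
  using assms
proof (induction P rule: finite_induct)
  case empty
  then show ?case
    by simp
next
  case (insert C P)
  have "det_on (C \<union> \<Union>P) M = det_on C M * det_on (\<Union>P) M"
  proof (rule det_on_block_triangular)
    show "finite C" "finite (\<Union>P)"
      using insert by auto
    show "C \<inter> \<Union>P = {}"
      using insert.prems(2) insert.hyps(2) by blast
    show "M i j = 0" if "i \<in> C" "j \<in> \<Union>P" for i j
      using that insert.prems(3) insert.hyps(2) by blast
  qed
  also have "det_on (\<Union>P) M = (\<Prod>C\<in>P. det_on C M)"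
  proof (rule insert.IH)
    show "finite D" if "D \<in> P" for D
      using insert.prems(1) that by blast
    show "D \<inter> D' = {}" if "D \<in> P" "D' \<in> P" "D \<noteq> D'" for D D'
      using insert.prems(2) that by blast
    show "M i j = 0" if "D \<in> P" "D' \<in> P" "D \<noteq> D'" "i \<in> D" "j \<in> D'" for D D' i j
      using insert.prems(3) that by blast
  qed
  finally show ?case
    using insert.hyps by simp
qed

section \<open>Laplacians of weighted cycles\<close>

lemma sign_cycle_of_list:
  "distinct cs \<Longrightarrow> sign (cycle_of_list cs) = (-1) ^ (length cs - 1)"
proof (induction cs rule: cycle_of_list.induct)
  case (1 i j cs)
  have "sign (cycle_of_list (i # j # cs)) = sign (transpose i j) * sign (cycle_of_list (j # cs))"
    by (simp add: sign_compose permutation_swap_id permutation_of_cycle)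
  also have "\<dots> = (-1) ^ (length (i # j # cs) - 1)"
    using 1 by (simp add: sign_swap_id)
  finally show ?case .
qed simp_all

lemma mod_add_neq:
  fixes a d k :: nat
  assumes "0 < d" "d < k"
  shows "(a + d) mod k \<noteq> a mod k"
proof
  assume "(a + d) mod k = a mod k"
  then have "k dvd d"
    using mod_eq_dvd_iff_nat[of a "a + d" k] by simp
  then show False
    using assms by (meson dvd_imp_le leD)
qed

lemma prod_lessThan_shift_periodic:
  fixes g :: "nat \<Rightarrow> 'b::comm_monoid_mult"
  assumes "0 < k" and per: "\<And>j. g (j + k) = g j"
  shows "(\<Prod>j<k. g (j + c)) = (\<Prod>j<k. g j)"
proof (induction c)
  case (Suc c)
  obtain m where k: "k = Suc m"
    using \<open>0 < k\<close> by (cases k) auto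
  have "(\<Prod>j<k. g (j + Suc c)) = (\<Prod>j<m. g (Suc j + c)) * g (k + c)"
    unfolding k prod.lessThan_Suc by simp
  also have "g (k + c) = g c"
    using per[of c] by (simp add: add.commute)
  also have "(\<Prod>j<m. g (Suc j + c)) * g c = (\<Prod>j<k. g (j + c))"
    unfolding k prod.lessThan_Suc_shift by (simp add: mult.commute)
  finally show ?case
    using Suc by simp
qed simp

text \<open>Indices along a cycle are taken modulo its length; the predecessor of position \<open>j\<close>
  is \<open>j + (length xs - 1)\<close>.\<close>

definition cyc_nth :: "'a list \<Rightarrow> nat \<Rightarrow> 'a" where
  "cyc_nth xs j = xs ! (j mod length xs)"

definition along_cycle :: "'a list \<Rightarrow> ('a \<Rightarrow> 'a) \<Rightarrow> bool" where
  "along_cycle xs p \<longleftrightarrow>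
     (\<forall>j. p (cyc_nth xs j) \<in> {cyc_nth xs j, cyc_nth xs (Suc j), cyc_nth xs (j + (length xs - 1))})"

definition cycle_laplacian :: "'a list \<Rightarrow> (nat \<Rightarrow> complex) \<Rightarrow> ('a \<Rightarrow> 'a \<Rightarrow> complex) \<Rightarrow> bool" where
  "cycle_laplacian xs w M \<longleftrightarrow>
     (\<forall>i < length xs. M (xs ! i) (xs ! i) = 2 \<and> M (xs ! i) (nxt xs i) = - w i
        \<and> M (nxt xs i) (xs ! i) = - cnj (w i) \<and> cnj (w i) * w i = 1)
   \<and> (\<forall>i < length xs. \<forall>j < length xs. xs ! j \<noteq> xs ! i \<longrightarrow> xs ! j \<noteq> nxt xs i \<longrightarrow> xs ! i \<noteq> nxt xs j
        \<longrightarrow> M (xs ! i) (xs ! j) = 0)"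

definition unit_cycle_laplacian :: "'a list \<Rightarrow> 'a \<Rightarrow> 'a \<Rightarrow> complex" where
  "unit_cycle_laplacian xs y z =
     (if y = z then 2
      else if \<exists>i < length xs. (y = xs ! i \<and> z = nxt xs i) \<or> (z = xs ! i \<and> y = nxt xs i) then -1
      else 0)"

context
  fixes xs :: "'a list"
  assumes dist: "distinct xs" and len: "3 \<le> length xs"
begin

lemma cycle_length_pos: "0 < length xs"
  using len by linarith

lemma cyc_nth_eq_iff: "cyc_nth xs a = cyc_nth xs b \<longleftrightarrow> a mod length xs = b mod length xs"
  unfolding cyc_nth_def using nth_eq_iff_index_eq[OF dist] cycle_length_pos by simp

lemma cyc_nth_nth: "i < length xs \<Longrightarrow> cyc_nth xs i = xs ! i"
  by (simp add: cyc_nth_def)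

lemma cyc_nth_mod: "cyc_nth xs (j mod length xs) = cyc_nth xs j"
  by (simp add: cyc_nth_def)

lemma cyc_nth_add_length: "cyc_nth xs (j + length xs) = cyc_nth xs j"
  by (simp add: cyc_nth_def)

lemma cyc_nth_in_set: "cyc_nth xs j \<in> set xs"
  unfolding cyc_nth_def using cycle_length_pos by simp

lemma nxt_eq_cyc_nth: "nxt xs i = cyc_nth xs (Suc i)"
  by (simp add: nxt_def cyc_nth_def)

lemma cyc_nth_add_neq: "0 < d \<Longrightarrow> d < length xs \<Longrightarrow> cyc_nth xs (a + d) \<noteq> cyc_nth xs a"
  unfolding cyc_nth_eq_iff by (rule mod_add_neq)

lemma cyc_nth_Suc_neq: "cyc_nth xs (Suc a) \<noteq> cyc_nth xs a"
  using cyc_nth_add_neq[of 1 a] len by simp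

lemma cyc_nth_Suc_Suc_neq: "cyc_nth xs (Suc (Suc a)) \<noteq> cyc_nth xs a"
  using cyc_nth_add_neq[of 2 a] len by simp

lemma cyc_nth_prev_neq: "cyc_nth xs (a + (length xs - 1)) \<noteq> cyc_nth xs a"
  using cyc_nth_add_neq[of "length xs - 1" a] len by simp

lemma cyc_nth_prev_neq_Suc: "cyc_nth xs (a + (length xs - 1)) \<noteq> cyc_nth xs (Suc a)"
proof -
  have "a + (length xs - 1) = Suc a + (length xs - 2)"
    using len by simp
  then show ?thesis
    using cyc_nth_add_neq[of "length xs - 2" "Suc a"] len by simp
qed

lemma cyc_nth_Suc_prev: "cyc_nth xs (Suc (a + (length xs - 1))) = cyc_nth xs a"
proof -
  have "Suc (a + (length xs - 1)) = a + length xs"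
    using len by simp
  then show ?thesis
    by (metis cyc_nth_add_length)
qed

lemma cyc_nth_prev_Suc: "cyc_nth xs (Suc a + (length xs - 1)) = cyc_nth xs a"
  using cyc_nth_Suc_prev by simp

lemma cyc_nth_add_cong: "cyc_nth xs a = cyc_nth xs b \<Longrightarrow> cyc_nth xs (a + c) = cyc_nth xs (b + c)"
  unfolding cyc_nth_eq_iff by (metis mod_add_left_eq)

lemma cyc_nth_Suc_cong: "cyc_nth xs a = cyc_nth xs b \<Longrightarrow> cyc_nth xs (Suc a) = cyc_nth xs (Suc b)"
  using cyc_nth_add_cong[of a b 1] by simp

lemma set_eq_cyc_nth_image: "set xs = cyc_nth xs ` {..<length xs}"
  by (force simp: cyc_nth_nth in_set_conv_nth cyc_nth_in_set)

lemma in_set_cyc_nthE: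
  assumes "y \<in> set xs"
  obtains j where "j < length xs" "y = cyc_nth xs j"
  using assms set_eq_cyc_nth_image by auto

lemma prod_set_cyc_nth: "(\<Prod>y\<in>set xs. f y) = (\<Prod>j<length xs. f (cyc_nth xs j))"
proof -
  have "inj_on (cyc_nth xs) {..<length xs}"
    by (rule inj_onI) (simp add: cyc_nth_eq_iff)
  then show ?thesis
    by (simp add: set_eq_cyc_nth_image prod.reindex)
qed

lemma cycle_of_list_cyc_nth: "cycle_of_list xs (cyc_nth xs j) = cyc_nth xs (Suc j)"
proof -
  let ?k = "length xs"
  have "map (cycle_of_list xs ^^ 1) xs = rotate 1 xs"
    by (rule cyclic_rotation[OF dist])
  then have "map (cycle_of_list xs) xs ! (j mod ?k) = rotate 1 xs ! (j mod ?k)"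
    by simp
  then have "cycle_of_list xs (xs ! (j mod ?k)) = rotate 1 xs ! (j mod ?k)"
    using cycle_length_pos by simp
  then show ?thesis
    using cycle_length_pos by (simp add: nth_rotate1 cyc_nth_def mod_Suc_eq add.commute)
qed

lemma inv_cycle_of_list_cyc_nth: "inv (cycle_of_list xs) (cyc_nth xs (Suc j)) = cyc_nth xs j"
  using cycle_of_list_cyc_nth[of j] permutes_inverses(2)[OF cycle_permutes] by metis

lemma along_cycle_forward_run:
  assumes p: "p permutes set xs" and along: "along_cycle xs p"
    and forward: "p (cyc_nth xs i) = cyc_nth xs (Suc i)" and not_back: "p (cyc_nth xs (Suc i)) \<noteq> cyc_nth xs i"
  shows "p (cyc_nth xs (i + t)) = cyc_nth xs (Suc (i + t)) \<and> p (cyc_nth xs (Suc (i + t))) \<noteq> cyc_nth xs (i + t)"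
proof (induction t)
  case 0
  then show ?case
    using forward not_back by simp
next
  case (Suc t)
  let ?a = "Suc (i + t)"
  have inj: "p x = p y \<Longrightarrow> x = y" for x y
    using injD[OF permutes_inj[OF p]] by blast
  have "p (cyc_nth xs ?a) \<in> {cyc_nth xs ?a, cyc_nth xs (Suc ?a), cyc_nth xs (?a + (length xs - 1))}"
    using along unfolding along_cycle_def by blast
  moreover have "p (cyc_nth xs ?a) \<noteq> cyc_nth xs ?a"
    using Suc.IH inj cyc_nth_Suc_neq by metis
  moreover have "p (cyc_nth xs ?a) \<noteq> cyc_nth xs (?a + (length xs - 1))"
    using Suc.IH cyc_nth_prev_Suc by simp
  moreover have "p (cyc_nth xs (Suc ?a)) \<noteq> cyc_nth xs ?a"
    using Suc.IH inj cyc_nth_Suc_Suc_neq by metis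
  ultimately show ?case
    by auto
qed

lemma along_cycle_forward:
  assumes p: "p permutes set xs" and along: "along_cycle xs p" and i: "i < length xs"
    and forward: "p (cyc_nth xs i) = cyc_nth xs (Suc i)" and not_back: "p (cyc_nth xs (Suc i)) \<noteq> cyc_nth xs i"
  shows "p = cycle_of_list xs"
proof
  fix x
  show "p x = cycle_of_list xs x"
  proof (cases "x \<in> set xs")
    case True
    then obtain j where j: "x = cyc_nth xs j"
      by (rule in_set_cyc_nthE)
    have e: "i + (length xs - i + j) = j + length xs"
      using i by simp
    have "p (cyc_nth xs (j + length xs)) = cyc_nth xs (Suc (j + length xs))"
      using along_cycle_forward_run[OF p along forward not_back, of "length xs - i + j"] unfolding e by simp
    then show ?thesis
      using j cyc_nth_add_length[of j] cyc_nth_add_length[of "Suc j"] cycle_of_list_cyc_nth by simp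
  next
    case False
    then show ?thesis
      using permutes_not_in[OF p] permutes_not_in[OF cycle_permutes[of xs]] by simp
  qed
qed

lemma along_cycle_inv:
  assumes p: "p permutes set xs" and along: "along_cycle xs p"
  shows "along_cycle xs (inv p)"
  unfolding along_cycle_def
proof
  fix j
  let ?k = "length xs"
  let ?N = "{cyc_nth xs j, cyc_nth xs (Suc j), cyc_nth xs (j + (?k - 1))}"
  have "inv p (cyc_nth xs j) \<in> set xs"
    using permutes_in_image[OF permutes_inv[OF p]] cyc_nth_in_set by blast
  then obtain m where m: "inv p (cyc_nth xs j) = cyc_nth xs m"
    by (rule in_set_cyc_nthE)
  then have "p (cyc_nth xs m) = cyc_nth xs j"
    using permutes_inverses(1)[OF p] by metis
  then have "cyc_nth xs j \<in> {cyc_nth xs m, cyc_nth xs (Suc m), cyc_nth xs (m + (?k - 1))}"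
    using along unfolding along_cycle_def by metis
  then have "cyc_nth xs m \<in> ?N"
  proof (elim insertE)
    assume "cyc_nth xs j = cyc_nth xs (Suc m)"
    then have "cyc_nth xs (j + (?k - 1)) = cyc_nth xs (Suc m + (?k - 1))"
      by (rule cyc_nth_add_cong)
    then show ?thesis
      using cyc_nth_prev_Suc by simp
  next
    assume "cyc_nth xs j = cyc_nth xs (m + (?k - 1))"
    then have "cyc_nth xs (Suc j) = cyc_nth xs (Suc (m + (?k - 1)))"
      by (rule cyc_nth_Suc_cong)
    then show ?thesis
      using cyc_nth_Suc_prev by simp
  qed auto
  then show "inv p (cyc_nth xs j) \<in> ?N"
    using m by simp
qed

lemma along_cycle_backward:
  assumes p: "p permutes set xs" and along: "along_cycle xs p" and i: "i < length xs"
    and backward: "p (cyc_nth xs (Suc i)) = cyc_nth xs i" and not_fwd: "p (cyc_nth xs i) \<noteq> cyc_nth xs (Suc i)"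
  shows "p = inv (cycle_of_list xs)"
proof -
  have "inv p (cyc_nth xs i) = cyc_nth xs (Suc i)"
    using backward permutes_inverses(2)[OF p] by metis
  moreover have "inv p (cyc_nth xs (Suc i)) \<noteq> cyc_nth xs i"
    using not_fwd permutes_inverses(1)[OF p] by metis
  ultimately have "inv p = cycle_of_list xs"
    by (rule along_cycle_forward[OF permutes_inv[OF p] along_cycle_inv[OF p along] i])
  then show ?thesis
    using inv_inv_eq[OF permutes_bij[OF p]] by metis
qed

lemma along_cycle_swaps:
  assumes p: "p permutes set xs" and along: "along_cycle xs p"
    and "p \<noteq> cycle_of_list xs" and "p \<noteq> inv (cycle_of_list xs)"
  shows "p (cyc_nth xs j) = cyc_nth xs (Suc j) \<longleftrightarrow> p (cyc_nth xs (Suc j)) = cyc_nth xs j"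
proof -
  let ?i = "j mod length xs"
  have i: "?i < length xs"
    using cycle_length_pos by simp
  have "cyc_nth xs ?i = cyc_nth xs j" "cyc_nth xs (Suc ?i) = cyc_nth xs (Suc j)"
    using cyc_nth_mod cyc_nth_Suc_cong[OF cyc_nth_mod] by blast+
  then show ?thesis
    using along_cycle_forward[OF p along i] along_cycle_backward[OF p along i] assms(3,4) by auto
qed

lemma cycle_laplacian_cyc_nth:
  assumes "cycle_laplacian xs w M"
  shows "M (cyc_nth xs j) (cyc_nth xs j) = 2"
    and "M (cyc_nth xs j) (cyc_nth xs (Suc j)) = - w (j mod length xs)"
    and "M (cyc_nth xs (Suc j)) (cyc_nth xs j) = - cnj (w (j mod length xs))"
    and "cnj (w (j mod length xs)) * w (j mod length xs) = 1"
    and "cyc_nth xs b \<noteq> cyc_nth xs a \<Longrightarrow> cyc_nth xs b \<noteq> cyc_nth xs (Suc a)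
      \<Longrightarrow> cyc_nth xs a \<noteq> cyc_nth xs (Suc b) \<Longrightarrow> M (cyc_nth xs a) (cyc_nth xs b) = 0"
proof -
  have lt: "n mod length xs < length xs" for n
    using cycle_length_pos by simp
  have nth: "cyc_nth xs n = xs ! (n mod length xs)" for n
    by (simp add: cyc_nth_def)
  have nxt: "nxt xs (n mod length xs) = cyc_nth xs (Suc n)" for n
    unfolding nxt_eq_cyc_nth by (rule cyc_nth_Suc_cong[OF cyc_nth_mod])
  have "M (xs ! i) (xs ! i) = 2 \<and> M (xs ! i) (nxt xs i) = - w i
      \<and> M (nxt xs i) (xs ! i) = - cnj (w i) \<and> cnj (w i) * w i = 1" if "i < length xs" for i
    using assms that unfolding cycle_laplacian_def by blast
  from this[OF lt[of j]]
  show "M (cyc_nth xs j) (cyc_nth xs j) = 2"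
    and "M (cyc_nth xs j) (cyc_nth xs (Suc j)) = - w (j mod length xs)"
    and "M (cyc_nth xs (Suc j)) (cyc_nth xs j) = - cnj (w (j mod length xs))"
    and "cnj (w (j mod length xs)) * w (j mod length xs) = 1"
    unfolding nxt nth[symmetric] by auto
  have "M (xs ! i) (xs ! i') = 0"
    if "i < length xs" "i' < length xs" "xs ! i' \<noteq> xs ! i" "xs ! i' \<noteq> nxt xs i" "xs ! i \<noteq> nxt xs i'" for i i'
    using assms that unfolding cycle_laplacian_def by blast
  from this[OF lt[of a] lt[of b]]
  show "M (cyc_nth xs a) (cyc_nth xs b) = 0"
    if "cyc_nth xs b \<noteq> cyc_nth xs a" "cyc_nth xs b \<noteq> cyc_nth xs (Suc a)" "cyc_nth xs a \<noteq> cyc_nth xs (Suc b)"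
    using that unfolding nxt nth[symmetric] by blast
qed

lemma cycle_laplacian_prod_not_along:
  assumes M: "cycle_laplacian xs w M" and p: "p permutes set xs" and "\<not> along_cycle xs p"
  shows "(\<Prod>y\<in>set xs. M y (p y)) = 0"
proof -
  let ?k = "length xs"
  obtain j where j: "p (cyc_nth xs j) \<notin> {cyc_nth xs j, cyc_nth xs (Suc j), cyc_nth xs (j + (?k - 1))}"
    using assms(3) unfolding along_cycle_def by blast
  have "p (cyc_nth xs j) \<in> set xs"
    using permutes_in_image[OF p] cyc_nth_in_set by blast
  then obtain b where b: "p (cyc_nth xs j) = cyc_nth xs b"
    by (rule in_set_cyc_nthE)
  have "cyc_nth xs j \<noteq> cyc_nth xs (Suc b)"
  proof
    assume "cyc_nth xs j = cyc_nth xs (Suc b)"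
    then have "cyc_nth xs (j + (?k - 1)) = cyc_nth xs (Suc b + (?k - 1))"
      by (rule cyc_nth_add_cong)
    then show False
      using j b cyc_nth_prev_Suc by simp
  qed
  then have "M (cyc_nth xs j) (p (cyc_nth xs j)) = 0"
    unfolding b using j b by (intro cycle_laplacian_cyc_nth(5)[OF M]) auto
  then show ?thesis
    using cyc_nth_in_set[of j] by (intro prod_zero) auto
qed

lemma cycle_laplacian_prod_along:
  assumes M: "cycle_laplacian xs w M" and p: "p permutes set xs" and along: "along_cycle xs p"
    and "p \<noteq> cycle_of_list xs" and "p \<noteq> inv (cycle_of_list xs)"
  shows "(\<Prod>y\<in>set xs. M y (p y)) = (\<Prod>j<length xs. if p (cyc_nth xs j) = cyc_nth xs j then 2 else 1)"
proof -
  let ?k = "length xs"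
  let ?prev = "\<lambda>j. j + (?k - 1)"
  note swaps = along_cycle_swaps[OF p along assms(4,5)]
  note entry = cycle_laplacian_cyc_nth[OF M]
  define F where "F j = (if p (cyc_nth xs j) = cyc_nth xs (Suc j) then - w (j mod ?k) else 1)" for j
  define G where "G j = (if p (cyc_nth xs (Suc j)) = cyc_nth xs j then - cnj (w (j mod ?k)) else 1)" for j
  define D where "D j = (if p (cyc_nth xs j) = cyc_nth xs j then 2 else 1 :: complex)" for j
  have factor: "M (cyc_nth xs j) (p (cyc_nth xs j)) = F j * G (?prev j) * D j" for j
  proof -
    have G_prev: "G (?prev j)
        = (if p (cyc_nth xs j) = cyc_nth xs (?prev j) then - cnj (w (?prev j mod ?k)) else 1)"
      unfolding G_def cyc_nth_Suc_prev ..
    have "p (cyc_nth xs j) \<in> {cyc_nth xs j, cyc_nth xs (Suc j), cyc_nth xs (?prev j)}"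
      using along unfolding along_cycle_def by blast
    moreover have "M (cyc_nth xs j) (cyc_nth xs (?prev j)) = - cnj (w (?prev j mod ?k))"
      using entry(3)[of "?prev j"] cyc_nth_Suc_prev by simp
    ultimately show ?thesis
      using cyc_nth_Suc_neq[of j] cyc_nth_prev_neq[of j] cyc_nth_prev_neq_Suc[of j] entry(1,2)[of j]
      unfolding G_prev by (auto simp: F_def D_def)
  qed
  have "F j * G j = 1" for j
    using swaps[of j] entry(4)[of j] by (auto simp: F_def G_def mult.commute)
  then have FG: "(\<Prod>j<?k. F j) * (\<Prod>j<?k. G j) = 1"
    by (simp flip: prod.distrib)
  have "(\<Prod>j<?k. G (?prev j)) = (\<Prod>j<?k. G j)"
    by (rule prod_lessThan_shift_periodic[OF cycle_length_pos])
       (simp add: G_def cyc_nth_add_length cyc_nth_add_length[of "Suc _", simplified])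
  then have "(\<Prod>y\<in>set xs. M y (p y)) = (\<Prod>j<?k. F j) * (\<Prod>j<?k. G j) * (\<Prod>j<?k. D j)"
    unfolding prod_set_cyc_nth factor by (simp add: prod.distrib)
  then show ?thesis
    unfolding FG by (simp add: D_def)
qed

lemma cycle_laplacian_prod_eq:
  assumes M: "cycle_laplacian xs w M" and M': "cycle_laplacian xs w' M'" and p: "p permutes set xs"
    and "p \<noteq> cycle_of_list xs" and "p \<noteq> inv (cycle_of_list xs)"
  shows "(\<Prod>y\<in>set xs. M y (p y)) = (\<Prod>y\<in>set xs. M' y (p y))"
proof (cases "along_cycle xs p")
  case True
  then show ?thesis
    using cycle_laplacian_prod_along[OF M p _ assms(4,5)] cycle_laplacian_prod_along[OF M' p _ assms(4,5)]
    by simp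
next
  case False
  show ?thesis
    unfolding cycle_laplacian_prod_not_along[OF M p False] cycle_laplacian_prod_not_along[OF M' p False] ..
qed

lemma cycle_laplacian_rotation_terms:
  assumes M: "cycle_laplacian xs w M"
  shows "of_int (sign (cycle_of_list xs)) * (\<Prod>y\<in>set xs. M y (cycle_of_list xs y))
      = - (\<Prod>i<length xs. w i)"
    and "of_int (sign (inv (cycle_of_list xs))) * (\<Prod>y\<in>set xs. M y (inv (cycle_of_list xs) y))
      = - cnj (\<Prod>i<length xs. w i)"
proof -
  let ?k = "length xs" and ?r = "cycle_of_list xs"
  note entry = cycle_laplacian_cyc_nth[OF M]
  have sign: "of_int (sign ?r) = (-1::complex) ^ (?k - 1)" "of_int (sign (inv ?r)) = (-1::complex) ^ (?k - 1)"
    using sign_cycle_of_list[OF dist] sign_inverse[OF permutation_of_cycle[of xs]] by simp_all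
  have minus_one: "(-1::complex) ^ (?k - 1) * (-1) ^ ?k = -1"
    using cycle_length_pos by (cases ?k) (simp_all flip: power_mult_distrib)
  have "(\<Prod>y\<in>set xs. M y (?r y)) = (\<Prod>j<?k. - w j)"
    unfolding prod_set_cyc_nth cycle_of_list_cyc_nth by (rule prod.cong) (simp_all add: entry(2))
  then show "of_int (sign ?r) * (\<Prod>y\<in>set xs. M y (?r y)) = - (\<Prod>i<?k. w i)"
    using minus_one by (simp add: sign prod_uminus mult.assoc[symmetric])
  have "(\<Prod>y\<in>set xs. M y (inv ?r y)) = (\<Prod>y\<in>set xs. M (?r y) (inv ?r (?r y)))"
    by (rule prod.reindex_bij_betw[OF permutes_imp_bij[OF cycle_permutes], symmetric])
  also have "\<dots> = (\<Prod>j<?k. - cnj (w j))"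
    unfolding permutes_inverses(2)[OF cycle_permutes] prod_set_cyc_nth cycle_of_list_cyc_nth
    by (rule prod.cong) (simp_all add: entry(3))
  finally show "of_int (sign (inv ?r)) * (\<Prod>y\<in>set xs. M y (inv ?r y)) = - cnj (\<Prod>i<?k. w i)"
    using minus_one by (simp add: sign prod_uminus mult.assoc[symmetric])
qed

lemma cycle_laplacian_unit: "cycle_laplacian xs (\<lambda>_. 1) (unit_cycle_laplacian xs)"
  unfolding cycle_laplacian_def
proof (intro conjI allI impI)
  fix i assume i: "i < length xs"
  have "xs ! i \<noteq> nxt xs i"
    using cyc_nth_Suc_neq[of i] cyc_nth_nth[OF i] nxt_eq_cyc_nth[of i] by simp
  then show "unit_cycle_laplacian xs (xs ! i) (xs ! i) = 2"
    and "unit_cycle_laplacian xs (xs ! i) (nxt xs i) = - 1"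
    and "unit_cycle_laplacian xs (nxt xs i) (xs ! i) = - cnj 1"
    and "cnj 1 * 1 = (1 :: complex)"
    using i unfolding unit_cycle_laplacian_def by auto
next
  fix i j assume ij: "i < length xs" "j < length xs" "xs ! j \<noteq> xs ! i"
    "xs ! j \<noteq> nxt xs i" "xs ! i \<noteq> nxt xs j"
  have "\<not> ((xs ! i = xs ! l \<and> xs ! j = nxt xs l) \<or> (xs ! j = xs ! l \<and> xs ! i = nxt xs l))"
    if "l < length xs" for l
    using ij that nth_eq_iff_index_eq[OF dist] by metis
  then show "unit_cycle_laplacian xs (xs ! i) (xs ! j) = 0"
    using ij(3) unfolding unit_cycle_laplacian_def by auto
qed

lemma det_on_unit_cycle_laplacian: "det_on (set xs) (unit_cycle_laplacian xs) = 0"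
proof (rule det_on_row_sums_zero)
  let ?k = "length xs" and ?U = "unit_cycle_laplacian xs"
  note entry = cycle_laplacian_cyc_nth[OF cycle_laplacian_unit]
  show "set xs \<noteq> {}"
    using cycle_length_pos by auto
  fix y assume "y \<in> set xs"
  then obtain i where y: "y = cyc_nth xs i"
    by (rule in_set_cyc_nthE)
  let ?a = "cyc_nth xs (Suc i)" and ?b = "cyc_nth xs (i + (?k - 1))"
  have distinct3: "?a \<noteq> y" "?b \<noteq> y" "?b \<noteq> ?a"
    using y cyc_nth_Suc_neq cyc_nth_prev_neq cyc_nth_prev_neq_Suc by auto
  have "?U y z = 0" if z: "z \<in> set xs - {y, ?a, ?b}" for z
  proof -
    obtain j where j: "z = cyc_nth xs j"
      using z by (auto elim: in_set_cyc_nthE)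
    have "cyc_nth xs i \<noteq> cyc_nth xs (Suc j)"
      using z j cyc_nth_add_cong[of i "Suc j" "?k - 1"] cyc_nth_prev_Suc[of j] by auto
    moreover have "cyc_nth xs j \<noteq> cyc_nth xs i" "cyc_nth xs j \<noteq> cyc_nth xs (Suc i)"
      using z y j by auto
    ultimately show ?thesis
      unfolding y j by (intro entry(5))
  qed
  then have "(\<Sum>z\<in>set xs. ?U y z) = (\<Sum>z\<in>{y, ?a, ?b}. ?U y z)"
    using y cyc_nth_in_set by (intro sum.mono_neutral_right) auto
  also have "\<dots> = ?U y y + ?U y ?a + ?U y ?b"
    using distinct3 by (simp add: add.assoc)
  also have "\<dots> = 0"
    using entry(1,2)[of i] entry(3)[of "i + (?k - 1)"] y cyc_nth_Suc_prev[of i] by simp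
  finally show "(\<Sum>z\<in>set xs. ?U y z) = 0" .
qed simp

text \<open>Compare with unit weights: there every row sums to zero, so the determinant vanishes, and
  only the two rotation terms differ.\<close>

lemma det_on_cycle_laplacian:
  assumes M: "cycle_laplacian xs w M"
  shows "det_on (set xs) M = 2 - (\<Prod>i<length xs. w i) - cnj (\<Prod>i<length xs. w i)"
proof -
  let ?r = "cycle_of_list xs" and ?U = "unit_cycle_laplacian xs"
  let ?P = "{p. p permutes set xs}" and ?R = "{cycle_of_list xs, inv (cycle_of_list xs)}"
  let ?t = "\<lambda>N p. of_int (sign p) * (\<Prod>y\<in>set xs. N y (p y)) :: complex"
  have R: "?R \<subseteq> ?P"
    using cycle_permutes permutes_inv by blast
  have "?r \<noteq> inv ?r"
  proof
    assume "?r = inv ?r"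
    then have "cyc_nth xs 1 = cyc_nth xs (length xs - 1)"
      using cycle_of_list_cyc_nth[of 0] inv_cycle_of_list_cyc_nth[of "length xs - 1"]
        cyc_nth_add_length[of 0] cycle_length_pos by simp
    moreover have "1 + (length xs - 2) = length xs - 1" "length xs - 2 < length xs"
      using len by simp_all
    ultimately show False
      using cyc_nth_add_neq[of "length xs - 2" 1] len by simp
  qed
  then have split: "det_on (set xs) N = ?t N ?r + ?t N (inv ?r) + (\<Sum>p\<in>?P - ?R. ?t N p)" for N
    unfolding det_on_def using sum.subset_diff[OF R finite_permutations, of "?t N"] by (simp add: add.commute)
  have "(\<Sum>p\<in>?P - ?R. ?t M p) = (\<Sum>p\<in>?P - ?R. ?t ?U p)"
    using cycle_laplacian_prod_eq[OF M cycle_laplacian_unit] by (intro sum.cong) auto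
  also have "\<dots> = 2"
    using split[of ?U] det_on_unit_cycle_laplacian cycle_laplacian_rotation_terms[OF cycle_laplacian_unit]
    by simp
  finally show ?thesis
    using split[of M] cycle_laplacian_rotation_terms[OF M] by simp
qed

end

section \<open>Pendant vertices and cycles in arc sets\<close>

definition incident :: "('a \<times> 'a) set \<Rightarrow> 'a \<Rightarrow> ('a \<times> 'a) set" where
  "incident A v = {e \<in> A. fst e = v \<or> snd e = v}"

definition deg :: "('a \<times> 'a) set \<Rightarrow> 'a \<Rightarrow> nat" where
  "deg A v = card (incident A v)"

definition neighbours :: "('a \<times> 'a) set \<Rightarrow> 'a \<Rightarrow> 'a set" where
  "neighbours A v = {y. (v, y) \<in> A \<or> (y, v) \<in> A}"

definition pendant :: "('a \<times> 'a) set \<Rightarrow> 'a \<Rightarrow> 'a \<Rightarrow> 'a \<times> 'a \<Rightarrow> bool" where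
  "pendant A v u e \<longleftrightarrow> u \<noteq> v \<and> (e = (v, u) \<or> e = (u, v)) \<and> incident A v = {e}"

lemma herm_lap_diag: "herm_lap \<omega> C A u u = of_nat (deg A u)"
  by (simp add: herm_lap_def deg_def incident_def)

lemma neighbours_sym: "y \<in> neighbours A x \<longleftrightarrow> x \<in> neighbours A y"
  by (auto simp: neighbours_def)

lemma finite_neighbours: "finite A \<Longrightarrow> finite (neighbours A v)"
  by (rule finite_subset[of _ "fst ` A \<union> snd ` A"]) (force simp: neighbours_def)+

lemma asym_irrefl: "asym A \<Longrightarrow> (x, x) \<notin> A"
  by (meson asymD)

lemma card_neighbours:
  assumes "asym A"
  shows "card (neighbours A v) = deg A v"
proof -
  let ?f = "\<lambda>e. if fst e = v then snd e else fst e"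
  let ?g = "\<lambda>y. if (v, y) \<in> A then (v, y) else (y, v)"
  have "bij_betw ?f (incident A v) (neighbours A v)"
    by (rule bij_betwI[where g = ?g])
       (use assms in \<open>auto simp: incident_def neighbours_def dest: asymD asym_irrefl\<close>)
  then show ?thesis
    unfolding deg_def by (simp add: bij_betw_same_card)
qed

lemma deg_pos_iff: "finite A \<Longrightarrow> 0 < deg A v \<longleftrightarrow> incident A v \<noteq> {}"
  by (simp add: deg_def card_gt_0_iff incident_def)

lemma sum_deg:
  assumes "finite C" and "finite A"
  shows "(\<Sum>v\<in>C. deg A v) = (\<Sum>e\<in>A. card (C \<inter> {fst e, snd e}))"
proof -
  let ?one = "\<lambda>v e. if fst e = v \<or> snd e = v then 1 else 0 :: nat"
  have "deg A v = (\<Sum>e\<in>A. ?one v e)" for v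
    unfolding deg_def incident_def card_eq_sum by (rule sum.inter_filter[OF assms(2)])
  then have "(\<Sum>v\<in>C. deg A v) = (\<Sum>v\<in>C. \<Sum>e\<in>A. ?one v e)"
    by simp
  also have "\<dots> = (\<Sum>e\<in>A. \<Sum>v\<in>C. ?one v e)"
    by (rule sum.swap)
  also have "\<dots> = (\<Sum>e\<in>A. card (C \<inter> {fst e, snd e}))"
  proof (rule sum.cong[OF refl])
    fix e
    have "C \<inter> {fst e, snd e} = {v \<in> C. fst e = v \<or> snd e = v}"
      by auto
    then show "(\<Sum>v\<in>C. ?one v e) = card (C \<inter> {fst e, snd e})"
      unfolding card_eq_sum by (simp only: sum.inter_filter[OF assms(1)])
  qed
  finally show ?thesis .
qed

lemma pendantD:
  assumes "pendant A v u e"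
  shows "e \<in> A" and "u \<noteq> v" and "e = (v, u) \<or> e = (u, v)"
    and "\<And>e'. e' \<in> A \<Longrightarrow> fst e' = v \<or> snd e' = v \<Longrightarrow> e' = e"
    and "neighbours A v = {u}"
proof -
  show e: "e \<in> A" and uv: "u \<noteq> v" and euv: "e = (v, u) \<or> e = (u, v)"
    using assms by (auto simp: pendant_def incident_def)
  show only: "e' = e" if "e' \<in> A" "fst e' = v \<or> snd e' = v" for e'
    using assms that by (auto simp: pendant_def incident_def)
  have "y = u" if "(v, y) \<in> A \<or> (y, v) \<in> A" for y
    using that only[of "(v, y)"] only[of "(y, v)"] euv uv by auto
  then show "neighbours A v = {u}"
    using e euv by (auto simp: neighbours_def)
qed

lemma pendant_other_arcs:
  assumes "pendant A v u e" and "e' \<in> A - {e}"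
  shows "fst e' \<noteq> v" "snd e' \<noteq> v"
  using assms pendantD(4)[OF assms(1), of e'] by auto

lemma pendant_deg_remove:
  assumes "pendant A v u e" and "y \<noteq> v"
  shows "deg (A - {e}) y = (if y = u then deg A u - 1 else deg A y)"
proof -
  have "incident (A - {e}) y = incident A y - {e}"
    by (auto simp: incident_def)
  moreover have "e \<in> incident A y \<longleftrightarrow> y = u"
    using pendantD(1,2,3)[OF assms(1)] \<open>y \<noteq> v\<close> by (auto simp: incident_def)
  ultimately show ?thesis
    unfolding deg_def by (cases "y = u") (auto simp: card_Diff_singleton_if)
qed

lemma herm_lap_pendant_row:
  assumes asym: "asym A" and pend: "pendant A v u e" and unit: "cnj \<omega> * \<omega> = 1"
  shows "herm_lap \<omega> C A v v = 1"
    and "j \<noteq> u \<Longrightarrow> j \<noteq> v \<Longrightarrow> herm_lap \<omega> C A v j = 0"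
    and "j \<noteq> u \<Longrightarrow> j \<noteq> v \<Longrightarrow> herm_lap \<omega> C A j v = 0"
    and "herm_lap \<omega> C A v u * herm_lap \<omega> C A u v = 1"
proof -
  note e = pendantD[OF pend]
  show "herm_lap \<omega> C A v v = 1"
    using pend by (simp add: herm_lap_diag deg_def pendant_def)
  show "herm_lap \<omega> C A v j = 0" "herm_lap \<omega> C A j v = 0" if "j \<noteq> u" "j \<noteq> v"
    using e(5) that by (auto simp: herm_lap_def neighbours_def)
  show "herm_lap \<omega> C A v u * herm_lap \<omega> C A u v = 1"
    using e(1-3) asymD[OF asym] unit by (auto simp: herm_lap_def mult.commute)
qed

lemma herm_lap_remove_pendant:
  assumes asym: "asym A" and fA: "finite A" and pend: "pendant A v u e" and unit: "cnj \<omega> * \<omega> = 1"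
    and "i \<noteq> v" and "j \<noteq> v"
  shows "herm_lap \<omega> C' (A - {e}) i j = (if j = u
      then herm_lap \<omega> C A i u - herm_lap \<omega> C A v u * herm_lap \<omega> C A i v else herm_lap \<omega> C A i j)"
proof -
  note e = pendantD[OF pend] and row = herm_lap_pendant_row[OF asym pend unit]
  have same_arcs: "(a, b) \<in> A - {e} \<longleftrightarrow> (a, b) \<in> A" if "a \<noteq> v" "b \<noteq> v" for a b
    using e(3) that by auto
  consider "i = u" "j = u" | "i \<noteq> u" "j = u" | "j \<noteq> u" "i = j" | "j \<noteq> u" "i \<noteq> j"
    by blast
  then show ?thesis
  proof cases
    case 1
    have "deg A u \<ge> 1"
      using e(1,3) fA deg_pos_iff[of A u] by (auto simp: incident_def)
    then show ?thesis
      using 1 row(4) pendant_deg_remove[OF pend e(2)] by (simp add: herm_lap_diag of_nat_diff)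
  next
    case 2
    then show ?thesis
      using assms(5,6) row(3)[of i] same_arcs[of i u] same_arcs[of u i] e(2) by (simp add: herm_lap_def)
  qed (use assms(5,6) pendant_deg_remove[OF pend, of j] same_arcs[of i j] same_arcs[of j i] in
       \<open>simp_all add: herm_lap_diag, simp add: herm_lap_def\<close>)
qed

text \<open>Adding a multiple of the column of a pendant vertex \<open>v\<close> to that of its neighbour \<open>u\<close>
  clears the row of \<open>v\<close>; the new \<open>u\<close>-diagonal entry is \<open>deg u - |\<omega>|\<^sup>2 = deg u - 1\<close>.\<close>

lemma det_on_herm_lap_remove_pendant:
  assumes fC: "finite C" and asym: "asym A" and fA: "finite A" and v: "v \<in> C" and u: "u \<in> C"
    and pend: "pendant A v u e" and unit: "cnj \<omega> * \<omega> = 1"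
  shows "det_on C (herm_lap \<omega> C A) = det_on (C - {v}) (herm_lap \<omega> (C - {v}) (A - {e}))"
proof -
  let ?M = "herm_lap \<omega> C A"
  note row = herm_lap_pendant_row[OF asym pend unit]
  define N where "N = (\<lambda>i j. if j = u then ?M i u + (- ?M v u) * ?M i v else ?M i j)"
  have "det_on C ?M = det_on C N"
    unfolding N_def by (rule det_on_add_column_multiple[OF fC u v pendantD(2)[OF pend], symmetric])
  also have "\<dots> = N v v * det_on (C - {v}) N"
    by (rule det_on_diagonal_row[OF fC v]) (auto simp: N_def row(1,2))
  also have "N v v = 1"
    using row(1) pendantD(2)[OF pend] by (simp add: N_def)
  also have "det_on (C - {v}) N = det_on (C - {v}) (herm_lap \<omega> (C - {v}) (A - {e}))"
  proof (rule det_on_cong)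
    fix i j assume "i \<in> C - {v}" "j \<in> C - {v}"
    then show "N i j = herm_lap \<omega> (C - {v}) (A - {e}) i j"
      using herm_lap_remove_pendant[OF asym fA pend unit, of i j "C - {v}" C] by (simp add: N_def)
  qed
  finally show ?thesis
    by simp
qed

definition prev_index :: "'a list \<Rightarrow> nat \<Rightarrow> nat" where
  "prev_index xs i = (i + (length xs - 1)) mod length xs"

lemma cycle_list_neighbours:
  assumes cyc: "is_cycle_list C A xs" and i: "i < length xs"
  shows "prev_index xs i < length xs" "nxt xs (prev_index xs i) = xs ! i"
    "nxt xs i \<in> neighbours A (xs ! i)" "xs ! prev_index xs i \<in> neighbours A (xs ! i)"
    "nxt xs i \<noteq> xs ! prev_index xs i" "xs ! prev_index xs i \<noteq> xs ! i" "nxt xs i \<noteq> xs ! i"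
    "nxt xs i \<in> set xs"
proof -
  have dist: "distinct xs" and len: "3 \<le> length xs"
    using cyc by (auto simp: is_cycle_list_def)
  have arc: "nxt xs j \<in> neighbours A (xs ! j)" if "j < length xs" for j
    using cyc that unfolding is_cycle_list_def by (simp add: neighbours_def)
  let ?m = "prev_index xs i"
  show m: "?m < length xs"
    unfolding prev_index_def using len by (intro mod_less_divisor) linarith
  have xm: "xs ! ?m = cyc_nth xs (i + (length xs - 1))"
    by (simp add: prev_index_def cyc_nth_def)
  have xi: "xs ! i = cyc_nth xs i"
    using cyc_nth_nth[OF dist len i] by simp
  have "nxt xs ?m = cyc_nth xs (Suc (i + (length xs - 1)))"
    unfolding nxt_eq_cyc_nth[OF dist len] prev_index_def
    by (rule cyc_nth_Suc_cong[OF dist len cyc_nth_mod[OF dist len]])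
  then show nm: "nxt xs ?m = xs ! i"
    using xi cyc_nth_Suc_prev[OF dist len] by simp
  show "nxt xs i \<in> neighbours A (xs ! i)"
    by (rule arc[OF i])
  show "xs ! ?m \<in> neighbours A (xs ! i)"
    using arc[OF m] nm by (simp add: neighbours_sym)
  show "nxt xs i \<noteq> xs ! ?m" "xs ! ?m \<noteq> xs ! i" "nxt xs i \<noteq> xs ! i" "nxt xs i \<in> set xs"
    using cyc_nth_prev_neq_Suc[OF dist len, of i] cyc_nth_prev_neq[OF dist len, of i]
      cyc_nth_Suc_neq[OF dist len, of i] cyc_nth_in_set[OF dist len] xm xi nxt_eq_cyc_nth[OF dist len, of i]
    by simp_all
qed

lemma cycle_list_neighbours_eq:
  assumes cyc: "is_cycle_list C A xs" and fA: "finite A" and i: "i < length xs"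
    and two: "card (neighbours A (xs ! i)) = 2"
  shows "neighbours A (xs ! i) = {nxt xs i, xs ! prev_index xs i}"
  using cycle_list_neighbours[OF cyc i] two
  by (intro card_seteq[OF finite_neighbours[OF fA], symmetric]) simp_all

definition is_path :: "('a \<times> 'a) set \<Rightarrow> 'a list \<Rightarrow> bool" where
  "is_path A ps \<longleftrightarrow> distinct ps \<and> (\<forall>i. Suc i < length ps \<longrightarrow> ps ! Suc i \<in> neighbours A (ps ! i))"

lemma longest_path_exists:
  assumes "finite C" and "c \<in> C"
  obtains ps where "is_path A ps" "set ps \<subseteq> C" "ps \<noteq> []"
    "\<And>qs. is_path A qs \<Longrightarrow> set qs \<subseteq> C \<Longrightarrow> qs \<noteq> [] \<Longrightarrow> length qs \<le> length ps"
proof -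
  let ?S = "{ps. is_path A ps \<and> set ps \<subseteq> C \<and> ps \<noteq> []}"
  have bounded: "\<forall>m. (\<exists>ps\<in>?S. length ps = m) \<longrightarrow> m \<le> card C"
  proof (intro allI impI)
    fix m assume "\<exists>ps\<in>?S. length ps = m"
    then obtain ps where "is_path A ps" "set ps \<subseteq> C" "length ps = m"
      by blast
    then show "m \<le> card C"
      using card_mono[OF assms(1)] distinct_card[of ps] by (metis is_path_def)
  qed
  have "\<exists>ps\<in>?S. length ps = 1"
    using assms(2) by (intro bexI[of _ "[c]"]) (simp_all add: is_path_def)
  then obtain n where "\<exists>ps\<in>?S. length ps = n" "\<And>m. \<exists>ps\<in>?S. length ps = m \<Longrightarrow> m \<le> n"
    using Nat.ex_has_greatest_nat[OF _ bounded] by blast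
  then show ?thesis
    using that by blast
qed

lemma is_path_snoc:
  assumes path: "is_path A ps" and "ps \<noteq> []" and "y \<notin> set ps" and y: "y \<in> neighbours A (last ps)"
  shows "is_path A (ps @ [y])"
  unfolding is_path_def
proof (intro conjI allI impI)
  show "distinct (ps @ [y])"
    using path \<open>y \<notin> set ps\<close> by (simp add: is_path_def)
  fix i assume "Suc i < length (ps @ [y])"
  then consider "Suc i < length ps" | "Suc i = length ps"
    by fastforce
  then show "(ps @ [y]) ! Suc i \<in> neighbours A ((ps @ [y]) ! i)"
  proof cases
    case 1
    then show ?thesis
      using path by (simp add: is_path_def nth_append)
  next
    case 2
    then have "i = length ps - 1"
      by simp
    then show ?thesis
      using 2 y \<open>ps \<noteq> []\<close> by (simp add: nth_append last_conv_nth)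
  qed
qed

lemma path_suffix_cycle:
  assumes path: "is_path A ps" and "set ps \<subseteq> C" and i: "i + 3 \<le> length ps"
    and closing: "ps ! i \<in> neighbours A (last ps)"
  shows "is_cycle_list C A (drop i ps)"
  unfolding is_cycle_list_def
proof (intro conjI allI impI)
  show "distinct (drop i ps)" "3 \<le> length (drop i ps)" "set (drop i ps) \<subseteq> C"
    using path i \<open>set ps \<subseteq> C\<close> set_drop_subset[of i ps] by (auto simp: is_path_def)
  fix j assume j: "j < length (drop i ps)"
  show "(drop i ps ! j, nxt (drop i ps) j) \<in> A \<or> (nxt (drop i ps) j, drop i ps ! j) \<in> A"
  proof (cases "Suc j < length (drop i ps)")
    case True
    then show ?thesis
      using path by (simp add: is_path_def nxt_def neighbours_def)
  next
    case False
    then have "Suc j = length (drop i ps)"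
      using j by simp
    then have "i + j = length ps - 1"
      by simp
    moreover have "ps \<noteq> []"
      using i by auto
    ultimately have "drop i ps ! j = last ps" "nxt (drop i ps) j = ps ! i"
      using i \<open>Suc j = length (drop i ps)\<close> by (simp_all add: nxt_def last_conv_nth)
    then show ?thesis
      using closing by (simp add: neighbours_def)
  qed
qed

text \<open>In a finite graph in which every vertex has exactly two neighbours, the last vertex of a
  longest path has both neighbours on the path; the one other than its predecessor closes a cycle.\<close>

lemma two_regular_cycle_exists:
  assumes fC: "finite C" and c: "c \<in> C" and sub: "A \<subseteq> C \<times> C" and asym: "asym A"
    and two: "\<And>y. y \<in> C \<Longrightarrow> card (neighbours A y) = 2"
  shows "\<exists>xs. is_cycle_list C A xs"
proof -
  obtain ps where path: "is_path A ps" and psC: "set ps \<subseteq> C" and "ps \<noteq> []"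
    and longest: "\<And>qs. is_path A qs \<Longrightarrow> set qs \<subseteq> C \<Longrightarrow> qs \<noteq> [] \<Longrightarrow> length qs \<le> length ps"
    using longest_path_exists[OF fC c] by blast
  let ?m = "length ps" and ?l = "last ps"
  have l: "?l \<in> C" "?l = ps ! (?m - 1)"
    using psC \<open>ps \<noteq> []\<close> by (auto simp: last_conv_nth)
  have closed: "y \<in> set ps" if y: "y \<in> neighbours A ?l" for y
  proof (rule ccontr)
    assume "y \<notin> set ps"
    moreover have "y \<in> C"
      using y sub by (auto simp: neighbours_def)
    ultimately show False
      using longest[OF is_path_snoc[OF path \<open>ps \<noteq> []\<close> _ y]] psC by auto
  qed
  have irr: "y \<notin> neighbours A y" for y
    using asym_irrefl[OF asym] by (auto simp: neighbours_def)
  have "2 \<le> ?m"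
  proof (rule ccontr)
    assume "\<not> 2 \<le> ?m"
    moreover have "0 < ?m"
      using \<open>ps \<noteq> []\<close> by simp
    ultimately have "length ps = 1"
      by linarith
    then obtain a where "ps = [a]"
      by (auto simp: length_Suc_conv)
    then have "neighbours A ?l = {}"
      using closed irr[of ?l] by auto
    then show False
      using two[OF l(1)] by simp
  qed
  define q where "q = ps ! (?m - 2)"
  have "Suc (?m - 2) < ?m" "Suc (?m - 2) = ?m - 1"
    using \<open>2 \<le> ?m\<close> by auto
  then have "ps ! (?m - 1) \<in> neighbours A q"
    using path unfolding q_def is_path_def by metis
  then have "q \<in> neighbours A ?l"
    unfolding l(2) by (simp add: neighbours_sym)
  obtain w where w: "w \<in> neighbours A ?l" "w \<noteq> q"
  proof (rule ccontr)
    assume "\<not> thesis"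
    then have "neighbours A ?l \<subseteq> {q}"
      using that by blast
    then have "card (neighbours A ?l) \<le> 1"
      using card_mono[of "{q}"] by fastforce
    then show False
      using two[OF l(1)] by simp
  qed
  then obtain i where i: "i < ?m" "w = ps ! i"
    using closed by (auto simp: in_set_conv_nth)
  have "i \<noteq> ?m - 1" "i \<noteq> ?m - 2"
    using w i l(2) irr q_def by auto
  then have "i + 3 \<le> ?m"
    using i(1) \<open>2 \<le> ?m\<close> by linarith
  then show ?thesis
    using path_suffix_cycle[OF path psC] w(1) i(2) by blast
qed

lemma cycle_list_spans_component:
  assumes cyc: "is_cycle_list C A xs"
    and nb: "\<And>i. i < length xs \<Longrightarrow> neighbours A (xs ! i) = {nxt xs i, xs ! prev_index xs i}"
    and conn: "\<And>x y. x \<in> C \<Longrightarrow> y \<in> C \<Longrightarrow> (x, y) \<in> (adj_rel C A)\<^sup>*"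
  shows "set xs = C"
proof
  show sC: "set xs \<subseteq> C"
    using cyc by (simp add: is_cycle_list_def)
  have closed: "neighbours A y \<subseteq> set xs" if "y \<in> set xs" for y
  proof -
    obtain i where i: "i < length xs" "y = xs ! i"
      using \<open>y \<in> set xs\<close> by (auto simp: in_set_conv_nth)
    then show ?thesis
      using nb[OF i(1)] cycle_list_neighbours(1,8)[OF cyc i(1)] by auto
  qed
  show "C \<subseteq> set xs"
  proof
    fix c assume "c \<in> C"
    have x0: "xs ! 0 \<in> set xs"
      using cyc by (intro nth_mem) (auto simp: is_cycle_list_def)
    then have "(xs ! 0, c) \<in> (adj_rel C A)\<^sup>*"
      using conn sC \<open>c \<in> C\<close> by blast
    then show "c \<in> set xs"
    proof (induction rule: rtrancl_induct)
      case (step y z)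
      then have "z \<in> neighbours A y"
        by (auto simp: adj_rel_def neighbours_def)
      then show ?case
        using closed[OF step.IH] by blast
    qed (rule x0)
  qed
qed

lemma cycle_list_arcs_all:
  assumes cyc: "is_cycle_list C A xs" and sub: "A \<subseteq> set xs \<times> set xs"
    and nb: "\<And>i. i < length xs \<Longrightarrow> neighbours A (xs ! i) = {nxt xs i, xs ! prev_index xs i}"
  shows "cycle_arcs A xs = A"
proof
  show "A \<subseteq> cycle_arcs A xs"
  proof
    fix e assume e: "e \<in> A"
    obtain a b where ab: "e = (a, b)"
      by (cases e)
    moreover have "a \<in> set xs"
      using e ab sub by auto
    ultimately obtain i where i: "i < length xs" "a = xs ! i"
      by (auto simp: in_set_conv_nth)
    have "b \<in> neighbours A a"
      using e ab by (simp add: neighbours_def)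
    then have "b = nxt xs i \<or> b = xs ! prev_index xs i"
      using nb[OF i(1)] i(2) by simp
    then show "e \<in> cycle_arcs A xs"
    proof
      assume "b = nxt xs i"
      then show ?thesis
        using e ab i unfolding cycle_arcs_def by blast
    next
      assume "b = xs ! prev_index xs i"
      then have "e = (nxt xs (prev_index xs i), xs ! prev_index xs i)"
        using ab i(2) cycle_list_neighbours(2)[OF cyc i(1)] by simp
      then show ?thesis
        using e cycle_list_neighbours(1)[OF cyc i(1)] unfolding cycle_arcs_def by blast
    qed
  qed
qed (auto simp: cycle_arcs_def)

lemma two_regular_cycle_covers:
  assumes cyc: "is_cycle_list C A xs" and fA: "finite A" and sub: "A \<subseteq> C \<times> C"
    and two: "\<And>y. y \<in> C \<Longrightarrow> card (neighbours A y) = 2"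
    and conn: "\<And>x y. x \<in> C \<Longrightarrow> y \<in> C \<Longrightarrow> (x, y) \<in> (adj_rel C A)\<^sup>*"
  shows "set xs = C" and "cycle_arcs A xs = A"
proof -
  have nb: "neighbours A (xs ! i) = {nxt xs i, xs ! prev_index xs i}" if "i < length xs" for i
    using cyc that by (intro cycle_list_neighbours_eq[OF cyc fA that two]) (auto simp: is_cycle_list_def)
  show "set xs = C"
    by (rule cycle_list_spans_component[OF cyc nb conn])
  then show "cycle_arcs A xs = A"
    using cycle_list_arcs_all[OF cyc _ nb] sub by simp
qed

definition cycle_weight :: "complex \<Rightarrow> ('a \<times> 'a) set \<Rightarrow> 'a list \<Rightarrow> complex" where
  "cycle_weight \<omega> A xs = (\<Prod>i<length xs. if (xs ! i, nxt xs i) \<in> A then \<omega> else cnj \<omega>)"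

lemma det_on_herm_lap_cycle:
  assumes cyc: "is_cycle_list C A xs" and asym: "asym A" and fA: "finite A"
    and nb: "\<And>i. i < length xs \<Longrightarrow> neighbours A (xs ! i) = {nxt xs i, xs ! prev_index xs i}"
    and unit: "cnj \<omega> * \<omega> = 1"
  shows "det_on (set xs) (herm_lap \<omega> C A) = 2 - cycle_weight \<omega> A xs - cnj (cycle_weight \<omega> A xs)"
proof -
  have dist: "distinct xs" and len: "3 \<le> length xs"
    using cyc by (auto simp: is_cycle_list_def)
  let ?M = "herm_lap \<omega> C A"
  define w where "w i = (if (xs ! i, nxt xs i) \<in> A then \<omega> else cnj \<omega>)" for i
  have "cycle_laplacian xs w ?M"
    unfolding cycle_laplacian_def
  proof (intro conjI allI impI)
    fix i assume i: "i < length xs"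
    note c = cycle_list_neighbours[OF cyc i]
    have "deg A (xs ! i) = 2"
      using card_neighbours[OF asym, of "xs ! i"] nb[OF i] c(5) by simp
    then show "?M (xs ! i) (xs ! i) = 2"
      by (simp add: herm_lap_diag)
    have "(xs ! i, nxt xs i) \<in> A \<or> (nxt xs i, xs ! i) \<in> A"
      using c(3) by (simp add: neighbours_def)
    then show "?M (xs ! i) (nxt xs i) = - w i" "?M (nxt xs i) (xs ! i) = - cnj (w i)"
      using c(7) asymD[OF asym] by (auto simp: herm_lap_def w_def)
    show "cnj (w i) * w i = 1"
      using unit by (simp add: w_def mult.commute)
  next
    fix i j assume i: "i < length xs" and j: "j < length xs"
      and "xs ! j \<noteq> xs ! i" "xs ! j \<noteq> nxt xs i" "xs ! i \<noteq> nxt xs j"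
    moreover have "xs ! j \<noteq> xs ! prev_index xs i"
      using nth_eq_iff_index_eq[OF dist j cycle_list_neighbours(1)[OF cyc i]]
        cycle_list_neighbours(2)[OF cyc i] \<open>xs ! i \<noteq> nxt xs j\<close> by auto
    ultimately have "xs ! j \<notin> neighbours A (xs ! i)"
      using nb[OF i] by simp
    then show "?M (xs ! i) (xs ! j) = 0"
      using \<open>xs ! j \<noteq> xs ! i\<close> by (auto simp: herm_lap_def neighbours_def)
  qed
  then show ?thesis
    using det_on_cycle_laplacian[OF dist len] by (simp add: cycle_weight_def w_def)
qed

section \<open>Components with as many arcs as vertices\<close>

text \<open>A connected component of an all-regular substructure, together with all arcs touching it;
  arcs may lead out of \<open>C\<close>.\<close>

definition regular_component :: "'a set \<Rightarrow> ('a \<times> 'a) set \<Rightarrow> bool" where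
  "regular_component C A \<longleftrightarrow> finite C \<and> finite A \<and> C \<noteq> {} \<and> asym A
     \<and> (\<forall>e\<in>A. fst e \<in> C \<or> snd e \<in> C) \<and> (\<forall>x\<in>C. \<forall>y\<in>C. (x, y) \<in> (adj_rel C A)\<^sup>*)
     \<and> card C = card A"

lemma regular_componentD:
  assumes "regular_component C A"
  shows "finite C" "finite A" "C \<noteq> {}" "asym A" "\<And>e. e \<in> A \<Longrightarrow> fst e \<in> C \<or> snd e \<in> C"
    "\<And>x y. x \<in> C \<Longrightarrow> y \<in> C \<Longrightarrow> (x, y) \<in> (adj_rel C A)\<^sup>*" "card C = card A"
  using assms unfolding regular_component_def by auto

lemma adj_rel_first_step:
  assumes "(x, y) \<in> (adj_rel C A)\<^sup>*" and "x \<noteq> y"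
  obtains z where "z \<in> C" "z \<in> neighbours A x"
  using assms by (cases rule: converse_rtranclE) (auto simp: adj_rel_def neighbours_def)

lemma regular_component_incident:
  assumes rc: "regular_component C A" and v: "v \<in> C"
  shows "incident A v \<noteq> {}"
proof (cases "C = {v}")
  case True
  then have "card A = 1"
    using regular_componentD(7)[OF rc] by simp
  then obtain e where "A = {e}"
    by (rule card_1_singletonE)
  then show ?thesis
    using regular_componentD(5)[OF rc, of e] True by (auto simp: incident_def)
next
  case False
  then obtain y where "y \<in> C" "y \<noteq> v"
    using v by blast
  then obtain z where "z \<in> neighbours A v"
    using regular_componentD(6)[OF rc v] adj_rel_first_step by metis
  then show ?thesis
    by (auto simp: incident_def neighbours_def)
qed

lemma regular_component_pendant:
  assumes rc: "regular_component C A" and v: "v \<in> C" and "deg A v \<le> 1"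
  obtains u e where "pendant A v u e"
proof -
  have "0 < deg A v"
    using deg_pos_iff[OF regular_componentD(2)[OF rc]] regular_component_incident[OF rc v] by simp
  then have "deg A v = 1"
    using \<open>deg A v \<le> 1\<close> by linarith
  then obtain e where e: "incident A v = {e}"
    unfolding deg_def by (rule card_1_singletonE)
  define u where "u = (if fst e = v then snd e else fst e)"
  have "e \<in> A" "fst e = v \<or> snd e = v"
    using e by (auto simp: incident_def)
  then have "e = (v, u) \<or> e = (u, v)" "u \<noteq> v"
    using asym_irrefl[OF regular_componentD(4)[OF rc]] unfolding u_def by (cases e; auto)+
  then show ?thesis
    using that e by (auto simp: pendant_def)
qed

lemma regular_component_pendant_outside:
  assumes rc: "regular_component C A" and v: "v \<in> C" and pend: "pendant A v u e" and "u \<notin> C"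
  shows "C = {v}" and "A = {e}"
proof -
  show C: "C = {v}"
  proof (rule ccontr)
    assume "C \<noteq> {v}"
    then obtain y where "y \<in> C" "y \<noteq> v"
      using v by blast
    then obtain z where "z \<in> C" "z \<in> neighbours A v"
      using regular_componentD(6)[OF rc v] adj_rel_first_step by metis
    then show False
      using pendantD(5)[OF pend] \<open>u \<notin> C\<close> by simp
  qed
  have "card A = 1"
    using regular_componentD(7)[OF rc] C by simp
  then show "A = {e}"
    using pendantD(1)[OF pend] by (auto simp: card_1_singleton_iff)
qed

lemma adj_rel_remove_pendant:
  assumes conn: "(x, y) \<in> (adj_rel C A)\<^sup>*" and pend: "pendant A v u e"
    and "u \<in> C" and "x \<noteq> v" and "y \<noteq> v"
  shows "(x, y) \<in> (adj_rel (C - {v}) (A - {e}))\<^sup>*"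
proof -
  let ?R = "adj_rel (C - {v}) (A - {e})"
  define \<pi> where "\<pi> z = (if z = v then u else z)" for z
  note e = pendantD[OF pend]
  have "(\<pi> a, \<pi> b) \<in> ?R\<^sup>*" if ab: "(a, b) \<in> adj_rel C A" for a b
  proof -
    consider "a = v" | "b = v" | "a \<noteq> v" "b \<noteq> v"
      by blast
    then show ?thesis
    proof cases
      case 1
      then have "b = u"
        using ab e(5) by (auto simp: adj_rel_def neighbours_def)
      then show ?thesis
        using 1 by (simp add: \<pi>_def)
    next
      case 2
      then have "a = u"
        using ab e(5) by (auto simp: adj_rel_def neighbours_def)
      then show ?thesis
        using 2 by (simp add: \<pi>_def)
    next
      case 3
      then have "(a, b) \<in> ?R"
        using ab e(3) by (auto simp: adj_rel_def)
      then show ?thesis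
        using 3 by (simp add: \<pi>_def)
    qed
  qed
  with conn have "(\<pi> x, \<pi> y) \<in> ?R\<^sup>*"
  proof (induction rule: rtrancl_induct)
    case (step b c)
    then show ?case
      by (meson rtrancl_trans)
  qed simp
  then show ?thesis
    using assms(4,5) by (simp add: \<pi>_def)
qed

lemma regular_component_remove_pendant:
  assumes rc: "regular_component C A" and v: "v \<in> C" and u: "u \<in> C" and pend: "pendant A v u e"
  shows "regular_component (C - {v}) (A - {e})"
proof -
  note rc' = regular_componentD[OF rc] and e = pendantD[OF pend]
  show ?thesis
    unfolding regular_component_def
  proof (intro conjI ballI)
    show "finite (C - {v})" "finite (A - {e})" "asym (A - {e})"
      using rc' by (auto simp: asym_iff)
    show "C - {v} \<noteq> {}"
      using u e(2) by blast
    show "fst e' \<in> C - {v} \<or> snd e' \<in> C - {v}" if "e' \<in> A - {e}" for e'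
      using rc'(5)[of e'] pendant_other_arcs[OF pend that] that by auto
    show "(x, y) \<in> (adj_rel (C - {v}) (A - {e}))\<^sup>*" if "x \<in> C - {v}" "y \<in> C - {v}" for x y
      using that rc'(6) by (intro adj_rel_remove_pendant[OF _ pend u]) auto
    show "card (C - {v}) = card (A - {e})"
      using rc' v e(1) by (simp add: card_Diff_singleton)
  qed
qed

text \<open>With no pendant vertex, the handshake count forces every arc inside \<open>C\<close> and every vertex
  of degree exactly two.\<close>

lemma regular_component_two_regular:
  assumes rc: "regular_component C A" and deg2: "\<And>v. v \<in> C \<Longrightarrow> 2 \<le> deg A v"
  shows "A \<subseteq> C \<times> C" and "\<And>v. v \<in> C \<Longrightarrow> card (neighbours A v) = 2"
proof -
  note rc' = regular_componentD[OF rc]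
  let ?ends = "\<lambda>e. card (C \<inter> {fst e, snd e})"
  have ends_le: "?ends e \<le> 2" for e
  proof -
    have "?ends e \<le> card {fst e, snd e}"
      by (rule card_mono) auto
    also have "\<dots> \<le> 2"
      by (cases "fst e = snd e") simp_all
    finally show ?thesis .
  qed
  have "(\<Sum>v\<in>C. 2) \<le> (\<Sum>v\<in>C. deg A v)"
    using deg2 by (rule sum_mono)
  moreover have "(\<Sum>e\<in>A. ?ends e) \<le> (\<Sum>e\<in>A. 2)"
    using ends_le by (rule sum_mono)
  moreover have "(\<Sum>e\<in>A. 2) = (\<Sum>v\<in>C. 2 :: nat)"
    using rc'(7) by simp
  ultimately have eq1: "(\<Sum>v\<in>C. deg A v) = (\<Sum>v\<in>C. 2)" and eq2: "(\<Sum>e\<in>A. ?ends e) = (\<Sum>e\<in>A. 2)"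
    using sum_deg[OF rc'(1,2)] by linarith+
  have "C \<inter> {fst e, snd e} = {fst e, snd e}" if "e \<in> A" for e
  proof (rule card_seteq)
    show "card {fst e, snd e} \<le> card (C \<inter> {fst e, snd e})"
      using sum_mono_inv[OF eq2 ends_le that rc'(2)] by (cases "fst e = snd e") simp_all
  qed auto
  then show "A \<subseteq> C \<times> C"
    by fastforce
  show "card (neighbours A v) = 2" if "v \<in> C" for v
    using sum_mono_inv[OF eq1[symmetric] deg2 that rc'(1)] card_neighbours[OF rc'(4)] by simp
qed

lemma regular_component_induct [consumes 1, case_names single pendant cycle]:
  assumes "regular_component C A"
    and single: "\<And>v u e. u \<noteq> v \<Longrightarrow> e = (v, u) \<or> e = (u, v) \<Longrightarrow> P {v} {e}"
    and pendant: "\<And>C A v u e. regular_component C A \<Longrightarrow> v \<in> C \<Longrightarrow> u \<in> C \<Longrightarrow> pendant A v u e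
      \<Longrightarrow> P (C - {v}) (A - {e}) \<Longrightarrow> P C A"
    and cycle: "\<And>C A. regular_component C A \<Longrightarrow> A \<subseteq> C \<times> C
      \<Longrightarrow> (\<And>v. v \<in> C \<Longrightarrow> card (neighbours A v) = 2) \<Longrightarrow> P C A"
  shows "P C A"
  using assms(1)
proof (induction "card C" arbitrary: C A rule: less_induct)
  case less
  note rc = less.prems
  show ?case
  proof (cases "\<exists>v\<in>C. deg A v \<le> 1")
    case True
    then obtain v u e where v: "v \<in> C" and pend: "pendant A v u e"
      using regular_component_pendant[OF rc] by metis
    show ?thesis
    proof (cases "u \<in> C")
      case True
      have "card (C - {v}) < card C"
        by (rule card_Diff1_less[OF regular_componentD(1)[OF rc] v])
      then show ?thesis
        using less.hyps regular_component_remove_pendant[OF rc v True pend]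
        by (intro pendant[OF rc v True pend]) simp
    next
      case False
      then show ?thesis
        using regular_component_pendant_outside[OF rc v pend False] pendantD(2,3)[OF pend] single
        by simp
    qed
  next
    case False
    then show ?thesis
      using cycle[OF rc regular_component_two_regular[OF rc]] by force
  qed
qed

lemma pendant_not_on_cycle:
  assumes cyc: "is_cycle_list C A xs" and pend: "pendant A v u e"
  shows "v \<notin> set xs"
proof
  assume "v \<in> set xs"
  then obtain i where i: "i < length xs" "v = xs ! i"
    by (auto simp: in_set_conv_nth)
  then show False
    using cycle_list_neighbours(3-5)[OF cyc i(1)] pendantD(5)[OF pend] by auto
qed

lemma pendant_arcs_between:
  assumes "pendant A v u e" and "a \<noteq> v" and "b \<noteq> v"
  shows "(a, b) \<in> A - {e} \<longleftrightarrow> (a, b) \<in> A"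
  using pendantD(3)[OF assms(1)] assms(2,3) by auto

lemma pendant_is_cycle_list_iff:
  assumes pend: "pendant A v u e"
  shows "is_cycle_list C A xs \<longleftrightarrow> is_cycle_list (C - {v}) (A - {e}) xs"
proof
  assume cyc: "is_cycle_list C A xs"
  have "v \<notin> set xs"
    by (rule pendant_not_on_cycle[OF cyc pend])
  moreover have "nxt xs i \<in> set xs" if "i < length xs" for i
    using cycle_list_neighbours(8)[OF cyc that] .
  ultimately show "is_cycle_list (C - {v}) (A - {e}) xs"
    using cyc pendant_arcs_between[OF pend] unfolding is_cycle_list_def
    by (metis (no_types, lifting) Diff_empty Diff_insert0 nth_mem subset_Diff_insert)
qed (auto simp: is_cycle_list_def)

lemma pendant_cycle_arcs:
  assumes cyc: "is_cycle_list C A xs" and pend: "pendant A v u e"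
  shows "cycle_arcs (A - {e}) xs = cycle_arcs A xs"
    and "cycle_weight \<omega> (A - {e}) xs = cycle_weight \<omega> A xs"
proof -
  have "xs ! i \<noteq> v" "nxt xs i \<noteq> v" if "i < length xs" for i
    using pendant_not_on_cycle[OF cyc pend] cycle_list_neighbours(8)[OF cyc that] that by auto
  then have arcs: "(xs ! i, nxt xs i) \<in> A - {e} \<longleftrightarrow> (xs ! i, nxt xs i) \<in> A"
      "(nxt xs i, xs ! i) \<in> A - {e} \<longleftrightarrow> (nxt xs i, xs ! i) \<in> A" if "i < length xs" for i
    using pendant_arcs_between[OF pend] that by blast+
  show "cycle_arcs (A - {e}) xs = cycle_arcs A xs"
    unfolding cycle_arcs_def using arcs by blast
  show "cycle_weight \<omega> (A - {e}) xs = cycle_weight \<omega> A xs"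
    unfolding cycle_weight_def using arcs by (intro prod.cong) auto
qed

lemma pendant_subset_iff:
  assumes "v \<in> C" and "u \<in> C" and pend: "pendant A v u e"
  shows "A - {e} \<subseteq> (C - {v}) \<times> (C - {v}) \<longleftrightarrow> A \<subseteq> C \<times> C"
proof
  assume sub: "A - {e} \<subseteq> (C - {v}) \<times> (C - {v})"
  show "A \<subseteq> C \<times> C"
  proof
    fix e' assume "e' \<in> A"
    then show "e' \<in> C \<times> C"
      using sub pendantD(3)[OF pend] assms(1,2) by (cases "e' = e") auto
  qed
next
  assume "A \<subseteq> C \<times> C"
  then show "A - {e} \<subseteq> (C - {v}) \<times> (C - {v})"
    using pendant_other_arcs[OF pend] by fastforce
qed

lemma regular_component_det_open:
  assumes "regular_component C A" and "\<not> A \<subseteq> C \<times> C" and unit: "cnj \<omega> * \<omega> = 1"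
  shows "det_on C (herm_lap \<omega> C A) = 1"
  using assms(1,2)
proof (induction rule: regular_component_induct)
  case (single v u e)
  then have "incident {e} v = {e}"
    by (auto simp: incident_def)
  then have "deg {e} v = 1"
    by (simp add: deg_def)
  moreover have "det_on {v} M = M v v" for M
    using det_on_diagonal_row[of "{v}" v M] by simp
  ultimately show ?case
    by (simp add: herm_lap_diag)
next
  case (pendant C A v u e)
  note rc = regular_componentD[OF pendant.hyps(1)]
  have "det_on C (herm_lap \<omega> C A) = det_on (C - {v}) (herm_lap \<omega> (C - {v}) (A - {e}))"
    by (rule det_on_herm_lap_remove_pendant[OF rc(1,4,2) pendant.hyps(2-4) unit])
  then show ?case
    using pendant.IH pendant.prems pendant_subset_iff[OF pendant.hyps(2-4)] by simp
qed simp

lemma regular_component_unique_cycle: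
  assumes "regular_component C A" and "A \<subseteq> C \<times> C"
  shows "card {cycle_arcs A xs | xs. is_cycle_list C A xs} = 1"
  using assms
proof (induction rule: regular_component_induct)
  case (pendant C A v u e)
  have "{cycle_arcs A xs | xs. is_cycle_list C A xs}
      = {cycle_arcs (A - {e}) xs | xs. is_cycle_list (C - {v}) (A - {e}) xs}"
    using pendant_is_cycle_list_iff[OF pendant.hyps(4)] pendant_cycle_arcs(1)[OF _ pendant.hyps(4)]
    by (intro Collect_cong ex_cong1) auto
  then show ?case
    using pendant.IH pendant.prems pendant_subset_iff[OF pendant.hyps(2-4)] by simp
next
  case (cycle C A)
  note rc = regular_componentD[OF cycle.hyps(1)]
  obtain c where "c \<in> C"
    using rc(3) by blast
  then obtain xs where "is_cycle_list C A xs"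
    using two_regular_cycle_exists[OF rc(1) _ cycle.hyps(2) rc(4) cycle.hyps(3)] by blast
  then have "{cycle_arcs A xs | xs. is_cycle_list C A xs} = {A}"
    using two_regular_cycle_covers(2)[OF _ rc(2) cycle.hyps(2,3) rc(6)] by blast
  then show ?case
    by simp
qed auto

lemma regular_component_det_cycle:
  assumes "regular_component C A" and "is_cycle_list C A xs" and unit: "cnj \<omega> * \<omega> = 1"
  shows "det_on C (herm_lap \<omega> C A) = 2 - cycle_weight \<omega> A xs - cnj (cycle_weight \<omega> A xs)"
  using assms(1,2)
proof (induction rule: regular_component_induct)
  case (single v u e)
  then have "distinct xs" "3 \<le> length xs" "set xs \<subseteq> {v}"
    by (auto simp: is_cycle_list_def)
  then have "length xs \<le> 1"
    using card_mono[of "{v}" "set xs"] distinct_card[of xs] by simp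
  with \<open>3 \<le> length xs\<close> show ?case
    by simp
next
  case (pendant C A v u e)
  note rc = regular_componentD[OF pendant.hyps(1)]
  have "det_on C (herm_lap \<omega> C A) = det_on (C - {v}) (herm_lap \<omega> (C - {v}) (A - {e}))"
    by (rule det_on_herm_lap_remove_pendant[OF rc(1,4,2) pendant.hyps(2-4) unit])
  then show ?case
    using pendant.IH pendant.prems pendant_is_cycle_list_iff[OF pendant.hyps(4)]
      pendant_cycle_arcs(2)[OF pendant.prems pendant.hyps(4)] by simp
next
  case (cycle C A)
  note rc = regular_componentD[OF cycle.hyps(1)]
  have "set xs = C"
    by (rule two_regular_cycle_covers(1)[OF cycle.prems rc(2) cycle.hyps(2,3) rc(6)])
  moreover have "neighbours A (xs ! i) = {nxt xs i, xs ! prev_index xs i}" if "i < length xs" for i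
    using cycle.prems cycle.hyps(3) \<open>set xs = C\<close> that
    by (intro cycle_list_neighbours_eq[OF cycle.prems rc(2) that]) auto
  ultimately show ?case
    using det_on_herm_lap_cycle[OF cycle.prems rc(4,2) _ unit] by simp
qed

section \<open>Fifth roots of unity\<close>

definition alpha_det :: real where
  "alpha_det = (5 + sqrt 5) / 2"

definition beta_det :: real where
  "beta_det = (5 - sqrt 5) / 2"

lemma omega5_eq_cis: "omega5 = cis (2 * pi / 5)"
  unfolding omega5_def cis_conv_exp by (simp add: field_simps)

lemma cos_2pi_div_5: "cos (2 * pi / 5) = (sqrt 5 - 1) / 4"
proof -
  define c where "c = cos (2 * pi / 5)"
  have "3 * (2 * pi / 5) = 2 * pi - 2 * (2 * pi / 5)"
    by simp
  then have "cos (3 * (2 * pi / 5)) = cos (2 * (2 * pi / 5))"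
    by (metis cos_2pi_minus)
  then have "(c - 1) * (4 * c ^ 2 + 2 * c - 1) = 0"
    unfolding c_def cos_treble_cos cos_double_cos by (simp add: algebra_simps power2_eq_square power3_eq_cube)
  moreover have "c < 1"
    using cos_monotone_0_pi[of 0 "2 * pi / 5"] pi_gt_zero by (simp add: c_def)
  ultimately have "4 * c ^ 2 + 2 * c - 1 = 0"
    by simp
  then have "(4 * c + 1) ^ 2 = 5"
    by (simp add: algebra_simps power2_eq_square)
  then have "sqrt ((4 * c + 1) ^ 2) = sqrt 5"
    by simp
  moreover have "0 < c"
    unfolding c_def by (rule cos_gt_zero_pi) (use pi_gt_zero in linarith)+
  ultimately have "4 * c + 1 = sqrt 5"
    by simp
  then show ?thesis
    by (simp add: c_def)
qed

lemma cos_4pi_div_5: "cos (4 * pi / 5) = - (sqrt 5 + 1) / 4"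
proof -
  have "cos (4 * pi / 5) = 2 * cos (2 * pi / 5) ^ 2 - 1"
    using cos_double_cos[of "2 * pi / 5"] by simp
  also have "\<dots> = 2 * ((sqrt 5 - 1) / 4) ^ 2 - 1"
    by (simp add: cos_2pi_div_5)
  also have "\<dots> = - (sqrt 5 + 1) / 4"
    by (simp add: power2_eq_square field_simps)
  finally show ?thesis .
qed

lemma cos_2pi_mult_div_mod:
  fixes v n :: nat
  shows "cos (2 * pi * real v / n) = cos (2 * pi * real (v mod n) / n)"
proof (cases "n = 0")
  case False
  have "real v = real (v mod n) + real n * real (v div n)"
    by (metis add.commute div_mult_mod_eq mult.commute of_nat_add of_nat_mult)
  then have "2 * pi * real v / n = 2 * pi * real (v mod n) / n + 2 * real (v div n) * pi"
    using False by (simp add: field_simps)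
  then have "cos (2 * pi * real v / n) = cos (2 * pi * real (v mod n) / n + 2 * real (v div n) * pi)"
    by (rule arg_cong)
  also have "\<dots> = cos (2 * pi * real (v mod n) / n)"
    by (simp only: cos_add cos_2npi sin_2npi)
  finally show ?thesis .
qed simp

lemma cos_2pi_mult_div_5:
  "cos (2 * pi * real v / 5) = (if v mod 5 = 0 then 1 else if v mod 5 \<in> {1, 4} then (sqrt 5 - 1) / 4
      else - (sqrt 5 + 1) / 4)"
proof -
  have "v mod 5 < 5"
    by simp
  then consider "v mod 5 = 0" | "v mod 5 = 1" | "v mod 5 = 2" | "v mod 5 = 3" | "v mod 5 = 4"
    by linarith
  then show ?thesis
  proof cases
    case 4
    have "2 * pi * 3 / 5 = 2 * pi - 4 * pi / 5"
      by simp
    then have "cos (2 * pi * 3 / 5) = - (sqrt 5 + 1) / 4"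
      by (metis cos_2pi_minus cos_4pi_div_5)
    then show ?thesis
      using cos_2pi_mult_div_mod[of v 5] 4 by simp
  next
    case 5
    have "2 * pi * 4 / 5 = 2 * pi - 2 * pi / 5"
      by simp
    then have "cos (2 * pi * 4 / 5) = (sqrt 5 - 1) / 4"
      by (metis cos_2pi_minus cos_2pi_div_5)
    then show ?thesis
      using cos_2pi_mult_div_mod[of v 5] 5 by simp
  qed (use cos_2pi_mult_div_mod[of v 5] cos_2pi_div_5 cos_4pi_div_5 in simp_all)
qed

lemma two_minus_two_cos_fifth:
  "2 - 2 * cos (2 * pi * real v / 5) =
     (if v mod 5 = 0 then 0 else if v mod 5 \<in> {1, 4} then beta_det else alpha_det)"
  unfolding cos_2pi_mult_div_5 alpha_det_def beta_det_def by (auto simp: field_simps)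

lemma prod_cis: "finite I \<Longrightarrow> (\<Prod>i\<in>I. cis (g i)) = cis (\<Sum>i\<in>I. g i)"
  by (induction I rule: finite_induct) (simp_all add: cis_mult)

lemma cycle_weight_cis:
  assumes cyc: "is_cycle_list C A xs" and asym: "asym A"
  shows "cycle_weight (cis \<theta>) A xs = cis (\<theta> * (real (length xs) - 2 * real (backward_count A xs)))"
proof -
  let ?k = "length xs" and ?back = "\<lambda>i. (nxt xs i, xs ! i) \<in> A"
  have forward: "(xs ! i, nxt xs i) \<in> A \<longleftrightarrow> \<not> ?back i" if "i < ?k" for i
    using cyc that asymD[OF asym] unfolding is_cycle_list_def by blast
  have "cycle_weight (cis \<theta>) A xs = (\<Prod>i<?k. cis (\<theta> - 2 * \<theta> * of_bool (?back i)))"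
    unfolding cycle_weight_def using forward by (intro prod.cong) (auto simp: cis_cnj)
  also have "\<dots> = cis (\<theta> * ?k - 2 * \<theta> * (\<Sum>i<?k. of_bool (?back i)))"
    by (simp add: prod_cis sum_subtractf sum_distrib_left) (simp add: algebra_simps)
  also have "(\<Sum>i<?k. of_bool (?back i) :: real) = real (backward_count A xs)"
    by (simp add: backward_count_def Int_def conj_commute)
  finally show ?thesis
    by (simp add: algebra_simps)
qed

lemma cos_cycle_value:
  "cos (\<theta> * (real (length xs) - 2 * real (backward_count A xs))) = cos (\<theta> * real (cycle_value A xs))"
proof -
  let ?k = "length xs" and ?b = "backward_count A xs"
  have "?b \<le> card {..<?k}"
    unfolding backward_count_def by (rule card_mono) auto
  then have b: "?b \<le> ?k"
    by simp
  show ?thesis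
  proof (cases "?b \<le> ?k - ?b")
    case True
    then have "real (cycle_value A xs) = real ?k - 2 * real ?b"
      using b by (simp add: cycle_value_def Let_def of_nat_diff)
    then show ?thesis
      by simp
  next
    case False
    then have "real (cycle_value A xs) = - (real ?k - 2 * real ?b)"
      using b by (simp add: cycle_value_def Let_def of_nat_diff)
    then show ?thesis
      by (metis cos_minus mult_minus_right)
  qed
qed
lemma two_minus_cis: "2 - cis t - cnj (cis t) = complex_of_real (2 - 2 * cos t)"
  by (simp add: complex_eq_iff cis_cnj)

lemma regular_component_det_omega5_pow:
  assumes rc: "regular_component C A" and cyc: "is_cycle_list C A xs"
  shows "det_on C (herm_lap (omega5 ^ m) C A)
      = complex_of_real (2 - 2 * cos (2 * pi * real (m * cycle_value A xs) / 5))"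
proof -
  let ?\<theta> = "real m * (2 * pi / 5)"
  have "omega5 ^ m = cis ?\<theta>"
    unfolding omega5_eq_cis DeMoivre ..
  moreover have "cnj (cis ?\<theta>) * cis ?\<theta> = 1"
    by (simp add: cis_cnj cis_mult)
  ultimately have "det_on C (herm_lap (omega5 ^ m) C A)
      = 2 - cycle_weight (cis ?\<theta>) A xs - cnj (cycle_weight (cis ?\<theta>) A xs)"
    using regular_component_det_cycle[OF rc cyc] by simp
  also have "\<dots> = complex_of_real (2 - 2 * cos (?\<theta> * real (cycle_value A xs)))"
    unfolding cycle_weight_cis[OF cyc regular_componentD(4)[OF rc]] two_minus_cis cos_cycle_value ..
  finally show ?thesis
    by (simp add: field_simps)
qed

lemma alpha_det_neq_beta_det: "alpha_det \<noteq> beta_det"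
  unfolding alpha_det_def beta_det_def by simp

lemma unicyclic_comp_cases:
  assumes "unicyclic_comp E' C"
  shows "alpha_comp E' C \<or> beta_comp E' C \<or> vanishing_comp E' C"
proof -
  have "{cycle_arcs (comp_arcs E' C) xs | xs. is_cycle_list C (comp_arcs E' C) xs} \<noteq> {}"
    using assms unfolding unicyclic_comp_def by (metis card.empty zero_neq_one)
  then obtain xs where cyc: "is_cycle_list C (comp_arcs E' C) xs"
    by auto
  let ?r = "cycle_value (comp_arcs E' C) xs mod 5"
  have "?r = 0 \<or> ?r = 1 \<or> ?r = 2 \<or> ?r = 3 \<or> ?r = 4"
    by presburger
  then consider "?r \<in> {2, 3}" | "?r \<in> {1, 4}" | "?r = 0"
    by fastforce
  then show ?thesis
  proof cases
    case 1
    then have "alpha_comp E' C"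
      unfolding alpha_comp_def using assms cyc by blast
    then show ?thesis ..
  next
    case 2
    then have "beta_comp E' C"
      unfolding beta_comp_def using assms cyc by blast
    then show ?thesis
      by simp
  next
    case 3
    then have "vanishing_comp E' C"
      unfolding vanishing_comp_def using assms cyc by auto
    then show ?thesis
      by simp
  qed
qed

lemma regular_component_det_classes:
  assumes rc: "regular_component C (A)" and cyc: "is_cycle_list C (A) xs"
  defines "v \<equiv> cycle_value (A) xs"
  shows "v mod 5 \<in> {2, 3} \<Longrightarrow> det_on C (herm_lap omega5 C (A)) = of_real alpha_det
      \<and> det_on C (herm_lap (omega5 ^ 2) C (A)) = of_real beta_det"
    and "v mod 5 \<in> {1, 4} \<Longrightarrow> det_on C (herm_lap omega5 C (A)) = of_real beta_det
      \<and> det_on C (herm_lap (omega5 ^ 2) C (A)) = of_real alpha_det"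
proof -
  have det: "det_on C (herm_lap (omega5 ^ m) C (A))
      = of_real (2 - 2 * cos (2 * pi * real (m * v) / 5))" for m
    unfolding v_def by (rule regular_component_det_omega5_pow[OF rc cyc])
  have double: "(2 * v) mod 5 = (2 * (v mod 5)) mod 5"
    by (simp add: mod_mult_right_eq)
  show "det_on C (herm_lap omega5 C (A)) = of_real alpha_det
      \<and> det_on C (herm_lap (omega5 ^ 2) C (A)) = of_real beta_det" if "v mod 5 \<in> {2, 3}"
  proof -
    have "(2 * v) mod 5 \<in> {1, 4}"
      using that double by auto
    then have "2 - 2 * cos (2 * pi * real (1 * v) / 5) = alpha_det"
      and "2 - 2 * cos (2 * pi * real (2 * v) / 5) = beta_det"
      using that two_minus_two_cos_fifth[of v] two_minus_two_cos_fifth[of "2 * v"] by auto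
    then show ?thesis
      using det[of 1] det[of 2] by simp
  qed
  show "det_on C (herm_lap omega5 C (A)) = of_real beta_det
      \<and> det_on C (herm_lap (omega5 ^ 2) C (A)) = of_real alpha_det" if "v mod 5 \<in> {1, 4}"
  proof -
    have "(2 * v) mod 5 \<in> {2, 3}"
      using that double by auto
    then have "2 - 2 * cos (2 * pi * real (1 * v) / 5) = beta_det"
      and "2 - 2 * cos (2 * pi * real (2 * v) / 5) = alpha_det"
      using that two_minus_two_cos_fifth[of v] two_minus_two_cos_fifth[of "2 * v"] by auto
    then show ?thesis
      using det[of 1] det[of 2] by simp
  qed
qed

lemma regular_component_not_alpha_and_beta:
  assumes rc: "regular_component C (comp_arcs E' C)"
  shows "\<not> (alpha_comp E' C \<and> beta_comp E' C)"
proof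
  assume "alpha_comp E' C \<and> beta_comp E' C"
  then obtain xs ys where "is_cycle_list C (comp_arcs E' C) xs" "cycle_value (comp_arcs E' C) xs mod 5 \<in> {2, 3}"
    and "is_cycle_list C (comp_arcs E' C) ys" "cycle_value (comp_arcs E' C) ys mod 5 \<in> {1, 4}"
    unfolding alpha_comp_def beta_comp_def by blast
  then have "of_real alpha_det = (of_real beta_det :: complex)"
    using regular_component_det_classes[OF rc] by metis
  then show False
    using alpha_det_neq_beta_det by simp
qed

lemma regular_component_det_non_unicyclic:
  assumes rc: "regular_component C (comp_arcs E' C)" and "\<not> unicyclic_comp E' C" and "cnj \<omega> * \<omega> = 1"
  shows "det_on C (herm_lap \<omega> C (comp_arcs E' C)) = 1"
  using assms regular_component_unique_cycle[OF rc] regular_component_det_open[OF rc]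
  unfolding unicyclic_comp_def by blast

lemma regular_component_det_omega5:
  assumes rc: "regular_component C (comp_arcs E' C)" and "\<not> vanishing_comp E' C"
  shows "det_on C (herm_lap omega5 C (comp_arcs E' C)) = of_real
      (if alpha_comp E' C then alpha_det else if beta_comp E' C then beta_det else 1)"
    and "det_on C (herm_lap (omega5 ^ 2) C (comp_arcs E' C)) = of_real
      (if alpha_comp E' C then beta_det else if beta_comp E' C then alpha_det else 1)"
proof -
  have unit: "cnj (omega5 ^ m) * omega5 ^ m = 1" for m
    unfolding omega5_eq_cis DeMoivre by (simp add: cis_cnj cis_mult)
  consider "alpha_comp E' C" | "beta_comp E' C" | "\<not> unicyclic_comp E' C"
    using unicyclic_comp_cases assms(2) by blast
  then have "det_on C (herm_lap omega5 C (comp_arcs E' C)) = of_real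
      (if alpha_comp E' C then alpha_det else if beta_comp E' C then beta_det else 1)
    \<and> det_on C (herm_lap (omega5 ^ 2) C (comp_arcs E' C)) = of_real
      (if alpha_comp E' C then beta_det else if beta_comp E' C then alpha_det else 1)"
  proof cases
    case 1
    then show ?thesis
      using regular_component_det_classes(1)[OF rc] by (auto simp: alpha_comp_def)
  next
    case 2
    then show ?thesis
      using regular_component_det_classes(2)[OF rc] regular_component_not_alpha_and_beta[OF rc]
      by (auto simp: beta_comp_def)
  next
    case 3
    then show ?thesis
      using regular_component_det_non_unicyclic[OF rc 3 unit[of 1]] regular_component_det_non_unicyclic[OF rc 3 unit[of 2]]
      by (auto simp: alpha_comp_def beta_comp_def)
  qed
  then show "det_on C (herm_lap omega5 C (comp_arcs E' C)) = of_real
      (if alpha_comp E' C then alpha_det else if beta_comp E' C then beta_det else 1)"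
    and "det_on C (herm_lap (omega5 ^ 2) C (comp_arcs E' C)) = of_real
      (if alpha_comp E' C then beta_det else if beta_comp E' C then alpha_det else 1)"
    by blast+
qed

section \<open>Components of a substructure\<close>

lemma equiv_conn_rel: "equiv V' (conn_rel V' E')"
proof (rule equivI)
  have "sym (adj_rel V' E')"
    by (auto simp: sym_def adj_rel_def)
  then have "sym ((adj_rel V' E')\<^sup>*)"
    by (rule sym_rtrancl)
  then show "sym (conn_rel V' E')"
    by (auto simp: sym_def conn_rel_def)
  show "trans (conn_rel V' E')"
    by (auto simp: trans_def conn_rel_def)
qed (auto simp: refl_on_def conn_rel_def)

lemma finite_components: "finite V' \<Longrightarrow> finite (components V' E')"
  unfolding components_def by (rule finite_quotient) (auto simp: conn_rel_def)

lemma components_subset: "C \<in> components V' E' \<Longrightarrow> C \<subseteq> V'"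
  using in_quotient_imp_subset[OF equiv_conn_rel] by (auto simp: components_def)

lemma components_disjoint:
  "C \<in> components V' E' \<Longrightarrow> D \<in> components V' E' \<Longrightarrow> C \<noteq> D \<Longrightarrow> C \<inter> D = {}"
  using quotient_disj[OF equiv_conn_rel, of C V' E' D] by (auto simp: components_def)

lemma components_closed:
  assumes "C \<in> components V' E'" and "x \<in> C" and "(x, y) \<in> adj_rel V' E'"
  shows "y \<in> C"
proof -
  have "(x, y) \<in> conn_rel V' E'"
    using assms(3) by (auto simp: conn_rel_def adj_rel_def)
  then show ?thesis
    using in_quotient_imp_closed[OF equiv_conn_rel] assms(1,2) by (auto simp: components_def)
qed

lemma components_connected:
  assumes C: "C \<in> components V' E'" and "x \<in> C" and "y \<in> C"
  shows "(x, y) \<in> (adj_rel C (comp_arcs E' C))\<^sup>*"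
proof -
  have "(x, y) \<in> conn_rel V' E'"
    using C assms(2,3) equiv_conn_rel unfolding components_def
    by (metis quotientE equiv_def sym_def trans_def Image_singleton_iff)
  then have "(x, y) \<in> (adj_rel V' E')\<^sup>*"
    by (simp add: conn_rel_def)
  then have "y \<in> C \<and> (x, y) \<in> (adj_rel C (comp_arcs E' C))\<^sup>*"
  proof (induction rule: rtrancl_induct)
    case (step z z')
    then have "z' \<in> C"
      using components_closed[OF C] by blast
    moreover have "(z, z') \<in> adj_rel C (comp_arcs E' C)"
      using step \<open>z' \<in> C\<close> by (auto simp: adj_rel_def comp_arcs_def)
    ultimately show ?case
      using step.IH by (meson rtrancl.rtrancl_into_rtrancl)
  qed (use \<open>x \<in> C\<close> in simp)
  then show ?thesis
    by simp
qed

lemma regular_component_of_component: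
  assumes "oriented_graph V E" and "substructure V E V' E'" and "all_regular V' E'"
    and C: "C \<in> components V' E'"
  shows "regular_component C (comp_arcs E' C)"
  unfolding regular_component_def
proof (intro conjI ballI)
  have "finite V" "E \<subseteq> V \<times> V" "V' \<subseteq> V" "E' \<subseteq> E"
    using assms(1,2) by (auto simp: oriented_graph_def substructure_def)
  then have "finite E'"
    using finite_subset[of E' "V \<times> V"] by blast
  then show "finite (comp_arcs E' C)"
    by (simp add: comp_arcs_def)
  show "finite C"
    using components_subset[OF C] \<open>V' \<subseteq> V\<close> \<open>finite V\<close> by (meson finite_subset)
  have "\<forall>u v. (u, v) \<in> E \<longrightarrow> (v, u) \<notin> E"
    using assms(1) by (simp add: oriented_graph_def)
  then show "asym (comp_arcs E' C)"
    unfolding asym_iff comp_arcs_def using \<open>E' \<subseteq> E\<close> by blast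
  show "C \<noteq> {}"
    using in_quotient_imp_non_empty[OF equiv_conn_rel] C by (auto simp: components_def)
  show "card C = card (comp_arcs E' C)"
    using assms(3) C by (simp add: all_regular_def)
  show "(x, y) \<in> (adj_rel C (comp_arcs E' C))\<^sup>*" if "x \<in> C" "y \<in> C" for x y
    using components_connected[OF C that] .
qed (auto simp: comp_arcs_def)

lemma herm_lap_comp_arcs:
  assumes "i \<in> C"
  shows "herm_lap \<omega> V' E' i j = herm_lap \<omega> C (comp_arcs E' C) i j"
proof -
  have diag: "{e \<in> E'. fst e = i \<or> snd e = i} = {e \<in> comp_arcs E' C. fst e = i \<or> snd e = i}"
    and arcs: "(i, j) \<in> E' \<longleftrightarrow> (i, j) \<in> comp_arcs E' C" "(j, i) \<in> E' \<longleftrightarrow> (j, i) \<in> comp_arcs E' C"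
    using assms by (auto simp: comp_arcs_def)
  show ?thesis
  proof (cases "i = j")
    case True
    then show ?thesis
      using diag by (simp add: herm_lap_def)
  next
    case False
    then show ?thesis
      using arcs by (simp add: herm_lap_def)
  qed
qed

lemma herm_lap_between_components:
  assumes C: "C \<in> components V' E'" and D: "D \<in> components V' E'" and "C \<noteq> D"
    and "i \<in> C" and "j \<in> D"
  shows "herm_lap \<omega> V' E' i j = 0"
proof -
  have "i \<noteq> j"
    using components_disjoint[OF C D \<open>C \<noteq> D\<close>] assms(4,5) by blast
  moreover have "(i, j) \<notin> adj_rel V' E'"
    using components_closed[OF C \<open>i \<in> C\<close>, of j] components_disjoint[OF C D \<open>C \<noteq> D\<close>] assms(5) by blast
  then have "(i, j) \<notin> E' \<and> (j, i) \<notin> E'"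
    using components_subset[OF C] components_subset[OF D] assms(4,5) by (auto simp: adj_rel_def)
  ultimately show ?thesis
    by (simp add: herm_lap_def)
qed

lemma det_on_herm_lap_components:
  assumes "finite V'"
  shows "det_on V' (herm_lap \<omega> V' E') = (\<Prod>C\<in>components V' E'. det_on C (herm_lap \<omega> C (comp_arcs E' C)))"
proof -
  have "det_on (\<Union>(components V' E')) (herm_lap \<omega> V' E')
      = (\<Prod>C\<in>components V' E'. det_on C (herm_lap \<omega> V' E'))"
  proof (rule det_on_Union_blocks)
    show "finite (components V' E')"
      using assms by (rule finite_components)
    show "finite C" if "C \<in> components V' E'" for C
      using components_subset[OF that] assms by (rule finite_subset)
  qed (simp_all add: components_disjoint herm_lap_between_components)
  moreover have "\<Union>(components V' E') = V'"
    unfolding components_def by (rule Union_quotient[OF equiv_conn_rel])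
  moreover have "det_on C (herm_lap \<omega> V' E') = det_on C (herm_lap \<omega> C (comp_arcs E' C))" for C
    by (rule det_on_cong) (rule herm_lap_comp_arcs)
  ultimately show ?thesis
    by simp
qed

lemma prod_if_two_classes:
  assumes "finite S" and "\<And>C. C \<in> S \<Longrightarrow> \<not> (P C \<and> Q C)"
  shows "(\<Prod>C\<in>S. if P C then x else if Q C then y else 1) = x ^ card {C \<in> S. P C} * y ^ card {C \<in> S. Q C}"
proof -
  have "(\<Prod>C\<in>S. if P C then x else if Q C then y else 1)
      = (\<Prod>C\<in>S. (if P C then x else 1) * (if Q C then y else 1))"
    using assms(2) by (intro prod.cong) auto
  also have "\<dots> = x ^ card {C \<in> S. P C} * y ^ card {C \<in> S. Q C}"
    by (simp add: prod.distrib prod.inter_filter[OF assms(1), symmetric])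
  finally show ?thesis .
qed

lemma alpha_det_times_beta_det: "alpha_det * beta_det = 5"
  by (simp add: alpha_det_def beta_det_def field_simps)

lemma beta_det_pos: "0 < beta_det"
proof -
  have "sqrt 5 < sqrt (5 ^ 2)"
    by (subst real_sqrt_less_iff) simp
  then show ?thesis
    by (simp add: beta_det_def)
qed

lemma golden_sq_eq: "golden ^ 2 = alpha_det / beta_det"
  using beta_det_pos
  by (simp add: golden_def alpha_det_def beta_det_def power2_eq_square field_simps)

lemma golden_sq_gt_1: "1 < golden ^ 2"
  by (rule one_less_power) (simp_all add: golden_def)

lemma log_alpha_beta_dets:
  "real (a + b) = log 5 ((alpha_det ^ a * beta_det ^ b) * (beta_det ^ a * alpha_det ^ b))"
  "real a - real b = log (golden ^ 2) ((alpha_det ^ a * beta_det ^ b) / (beta_det ^ a * alpha_det ^ b))"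
proof -
  have "(alpha_det ^ a * beta_det ^ b) * (beta_det ^ a * alpha_det ^ b) = (alpha_det * beta_det) ^ (a + b)"
    by (simp add: power_add power_mult_distrib algebra_simps)
  then show "real (a + b) = log 5 ((alpha_det ^ a * beta_det ^ b) * (beta_det ^ a * alpha_det ^ b))"
    by (simp add: alpha_det_times_beta_det log_nat_power)
  have "(alpha_det ^ a * beta_det ^ b) / (beta_det ^ a * alpha_det ^ b) = (golden ^ 2) ^ a / (golden ^ 2) ^ b"
    using beta_det_pos alpha_det_times_beta_det by (simp add: golden_sq_eq power_divide field_simps)
  moreover have "log (golden ^ 2) ((golden ^ 2) ^ a / (golden ^ 2) ^ b) = real a - real b"
  proof -
    have "0 < golden ^ 2" "golden ^ 2 \<noteq> 1"
      using golden_sq_gt_1 by linarith+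
    then show ?thesis
      by (simp add: log_divide_pos log_nat_power)
  qed
  ultimately show "real a - real b
      = log (golden ^ 2) ((alpha_det ^ a * beta_det ^ b) / (beta_det ^ a * alpha_det ^ b))"
    by simp
qed

lemma det_on_herm_lap_omega5_powers:
  assumes "oriented_graph V E" and "substructure V E V' E'" and "all_regular V' E'"
    and no_vanishing: "\<forall>C \<in> components V' E'. \<not> vanishing_comp E' C"
  defines "n\<^sub>\<alpha> \<equiv> card {C \<in> components V' E'. alpha_comp E' C}"
    and "n\<^sub>\<beta> \<equiv> card {C \<in> components V' E'. beta_comp E' C}"
  shows "det_on V' (herm_lap omega5 V' E') = of_real (alpha_det ^ n\<^sub>\<alpha> * beta_det ^ n\<^sub>\<beta>)"
    and "det_on V' (herm_lap (omega5 ^ 2) V' E') = of_real (beta_det ^ n\<^sub>\<alpha> * alpha_det ^ n\<^sub>\<beta>)"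
proof -
  let ?P = "components V' E'" and ?\<alpha> = "alpha_comp E'" and ?\<beta> = "beta_comp E'"
  have "finite V'"
    using assms(1,2) by (auto simp: oriented_graph_def substructure_def intro: finite_subset)
  have rc: "regular_component C (comp_arcs E' C)" if "C \<in> ?P" for C
    using regular_component_of_component[OF assms(1-3) that] .
  have classes: "(\<Prod>C\<in>?P. if ?\<alpha> C then x else if ?\<beta> C then y else 1) = x ^ n\<^sub>\<alpha> * y ^ n\<^sub>\<beta>"
    for x y :: real
    unfolding n\<^sub>\<alpha>_def n\<^sub>\<beta>_def
    by (rule prod_if_two_classes[OF finite_components[OF \<open>finite V'\<close>]])
       (rule regular_component_not_alpha_and_beta[OF rc])
  show "det_on V' (herm_lap omega5 V' E') = of_real (alpha_det ^ n\<^sub>\<alpha> * beta_det ^ n\<^sub>\<beta>)"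
    unfolding det_on_herm_lap_components[OF \<open>finite V'\<close>] classes[symmetric] of_real_prod
    using regular_component_det_omega5(1)[OF rc] no_vanishing by (intro prod.cong) simp_all
  show "det_on V' (herm_lap (omega5 ^ 2) V' E') = of_real (beta_det ^ n\<^sub>\<alpha> * alpha_det ^ n\<^sub>\<beta>)"
    unfolding det_on_herm_lap_components[OF \<open>finite V'\<close>] classes[symmetric] of_real_prod
    using regular_component_det_omega5(2)[OF rc] no_vanishing by (intro prod.cong) simp_all
qed

theorem mainTheorem14:
  fixes V V' :: "'a set" and E E' :: "('a \<times> 'a) set" and n\<^sub>\<alpha> n\<^sub>\<beta> :: nat
  assumes "oriented_graph V E"
    and "substructure V E V' E'"
    and "all_regular V' E'"
    and "n\<^sub>\<alpha> = card {C \<in> components V' E'. alpha_comp E' C}"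
    and "n\<^sub>\<beta> = card {C \<in> components V' E'. beta_comp E' C}"
    and "\<forall>C \<in> components V' E'. \<not> vanishing_comp E' C"
  shows "Im (det_on V' (herm_lap omega5 V' E')) = 0
    \<and> Im (det_on V' (herm_lap (omega5 ^ 2) V' E')) = 0
    \<and> real (n\<^sub>\<alpha> + n\<^sub>\<beta>) = log 5 (Re (det_on V' (herm_lap omega5 V' E'))
                               * Re (det_on V' (herm_lap (omega5 ^ 2) V' E')))
    \<and> real n\<^sub>\<alpha> - real n\<^sub>\<beta> = log (golden ^ 2) (Re (det_on V' (herm_lap omega5 V' E'))
                               / Re (det_on V' (herm_lap (omega5 ^ 2) V' E')))"
  using det_on_herm_lap_omega5_powers[OF assms(1-3,6)] log_alpha_beta_dets[of n\<^sub>\<alpha> n\<^sub>\<beta>]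
  unfolding assms(4,5)[symmetric] by simp

end
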